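(* Let $L^{p}_n \subset k[x_0, x_1, \dotsc , x_n]$ be any saturated lexicographic ideal, with minimal monomial generators $m_1, m_2, \dotsc, m_{n-(\ell+1)}$ listed in the order described in the context. (i) A minimal monomial generator $m \in L^{p}_n$ is expandable if and only if $m$ is the smallest minimal monomial generator of its degree in $L^{p}_n$. (ii) Let $m_{n-(\ell+1)}$ denote the last minimal monomial generator of $L^{p}_n$. If $m \neq m_{n-(\ell+1)}$ is any other expandable generator of $L^{p}_n$, and $(L^{p}_n)'$ is the expansion of $L^{p}_n$ at $m$, then every minimal monomial generator $g \in (L^{p}_n)'$ satisfies $\deg g < 1 + \deg m_{n-(\ell+1)}$. (iii) Moreover, in (ii), we have $\deg K_{L^{1+p}_n} > \deg K_{(L^{p}_n)'}$.
   Context: $k$ is an algebraically closed field and $k[x_0,\dotsc,x_n]$ is standard graded. $p$ is an admissible Hilbert polynomial with Macaulay--Hartshorne expression $p(t)=\sum_{i=0}^d \binom{t+i}{i+1}-\binom{t+i-e_i}{i+1}$, $e_0\ge\dotsb\ge e_d>0$, $d=\deg p$, and $n>d$. $L^{p}_n$ is the saturated lexicographic ideal in $k[x_0,\dotsc,x_n]$ with Hilbert polynomial $p$; setting $e_i:=0$ for $d<i\le n$ and $a_j:=e_j-e_{j+1}$, it is generated by $x_0,\dotsc,x_{n-(d+2)}$, $x_{n-(d+1)}^{a_d+1}$, $x_{n-(d+1)}^{a_d}x_{n-d}^{a_{d-1}+1}$, $\dotsc$, $x_{n-(d+1)}^{a_d}\dotsb x_{n-3}^{a_2}x_{n-2}^{a_1+1}$,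 $x_{n-(d+1)}^{a_d}\dotsb x_{n-2}^{a_1}x_{n-1}^{a_0}$. Its minimal generators $m_1,\dotsc,m_{n-(\ell+1)}$ are obtained from this list (in this order) by deleting the redundant ones, where $\ell$ is such that $a_0=\dotsb=a_\ell=0$ and $a_{\ell+1}>0$ (with $\ell=-1$ if $a_0\ne0$); the last one is $m_{n-(\ell+1)}=x_{n-(d+1)}^{a_d}x_{n-d}^{a_{d-1}}\dotsb x_{n-(\ell+2)}^{a_{\ell+1}}$, and $\deg m_j$ is maximized at $j=n-(\ell+1)$. For a saturated Borel ideal $I\subseteq k[x_0,\dotsc,x_n]$, a minimal monomial generator $g$ is expandable if $\{g x_{i+1}x_i^{-1} : x_i \mid g,\ 0\le i<n-1\}$ contains no minimal monomial generator of $I$; the expansion of $I$ at $g$ is $\langle I\setminus\langle g\rangle\rangle+\langle g x_j : \max g\le j\le n-1\rangle$, where $\max g$ is the largest index of a variable dividing $g$. $L^{1+p}_n$ is the lexicographic ideal with Hilbert polynomial $1+p$ (it equals the expansion of $L^{p}_n$ at $m_{n-(\ell+1)}$). For a homogeneous ideal $J$, $K_J$ denotes the $K$-polynomial of $k[x_0,\dotsc,x_n]/J$, i.e. the numerator of its Hilbert series written as $K_J(T)/(1-T)^{n+1}$. *)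

theory Defs
  imports "HOL-Computational_Algebra.Computational_Algebra"
begin

text \<open>Monomials of k[x_0,...,x_n] are represented by exponent vectors
  a :: nat => nat with a i = 0 for i > n.  Divisibility of monomials is the
  pointwise order on exponent vectors; monomial ideals are represented by
  their sets of monomials (a monomial ideal is determined by them).\<close>

definition monoms :: "nat \<Rightarrow> (nat \<Rightarrow> nat) set" where
  "monoms n = {a. \<forall>i. n < i \<longrightarrow> a i = 0}"

definition mdeg :: "nat \<Rightarrow> (nat \<Rightarrow> nat) \<Rightarrow> nat" where
  "mdeg n a = (\<Sum>i\<le>n. a i)"

definition var :: "nat \<Rightarrow> nat \<Rightarrow> nat" where
  "var j = (\<lambda>i. if i = j then 1 else 0)"

definition mideal :: "nat \<Rightarrow> (nat \<Rightarrow> nat) set \<Rightarrow> (nat \<Rightarrow> nat) set" where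
  "mideal n S = {a \<in> monoms n. \<exists>s\<in>S. s \<le> a}"

definition mingens :: "(nat \<Rightarrow> nat) set \<Rightarrow> (nat \<Rightarrow> nat) set" where
  "mingens I = {a \<in> I. \<forall>b\<in>I. b \<le> a \<longrightarrow> b = a}"

text \<open>Strict lexicographic order with x_0 > x_1 > ... > x_n:
  lex_less a b means a <_lex b.\<close>
definition lex_less :: "(nat \<Rightarrow> nat) \<Rightarrow> (nat \<Rightarrow> nat) \<Rightarrow> bool" where
  "lex_less a b \<longleftrightarrow> (\<exists>i. a i < b i \<and> (\<forall>j<i. a j = b j))"

text \<open>Macaulay--Hartshorne data: e_i for i <= d, extended by e_i = 0 for i > d;
  a_j = e_j - e_(j+1).\<close>
definition ee :: "nat \<Rightarrow> (nat \<Rightarrow> nat) \<Rightarrow> nat \<Rightarrow> nat" where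
  "ee d e i = (if i \<le> d then e i else 0)"

definition aa :: "nat \<Rightarrow> (nat \<Rightarrow> nat) \<Rightarrow> nat \<Rightarrow> nat" where
  "aa d e j = ee d e j - ee d e (Suc j)"

text \<open>Generator x_(n-(d+1))^(a_d) ... x_(n-(j+2))^(a_(j+1)) x_(n-(j+1))^(a_j+1), 1 <= j <= d.\<close>
definition lexgenG :: "nat \<Rightarrow> nat \<Rightarrow> (nat \<Rightarrow> nat) \<Rightarrow> nat \<Rightarrow> nat \<Rightarrow> nat" where
  "lexgenG n d e j = (\<lambda>v. if v = n - Suc j then aa d e j + 1
       else if (\<exists>i. j < i \<and> i \<le> d \<and> v = n - Suc i) then aa d e (n - Suc v) else 0)"

text \<open>Final generator x_(n-(d+1))^(a_d) ... x_(n-2)^(a_1) x_(n-1)^(a_0).\<close>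
definition lexgenF :: "nat \<Rightarrow> nat \<Rightarrow> (nat \<Rightarrow> nat) \<Rightarrow> nat \<Rightarrow> nat" where
  "lexgenF n d e = (\<lambda>v. if (\<exists>i. i \<le> d \<and> v = n - Suc i) then aa d e (n - Suc v) else 0)"

text \<open>The generating list of L^p_n in the order of the paper:
  x_0, ..., x_(n-(d+2)), then the generators for j = d, d-1, ..., 1, then the final one.\<close>
definition lexgens :: "nat \<Rightarrow> nat \<Rightarrow> (nat \<Rightarrow> nat) \<Rightarrow> (nat \<Rightarrow> nat) list" where
  "lexgens n d e = map var [0..<n - Suc d] @ map (lexgenG n d e) (rev [1..<Suc d]) @ [lexgenF n d e]"

definition LexIdeal :: "nat \<Rightarrow> nat \<Rightarrow> (nat \<Rightarrow> nat) \<Rightarrow> (nat \<Rightarrow> nat) set" where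
  "LexIdeal n d e = mideal n (set (lexgens n d e))"

definition lastgen :: "nat \<Rightarrow> nat \<Rightarrow> (nat \<Rightarrow> nat) \<Rightarrow> nat \<Rightarrow> nat" where
  "lastgen n d e = last (filter (\<lambda>g. g \<in> mingens (LexIdeal n d e)) (lexgens n d e))"

definition smallest_of_degree :: "nat \<Rightarrow> (nat \<Rightarrow> nat) set \<Rightarrow> (nat \<Rightarrow> nat) \<Rightarrow> bool" where
  "smallest_of_degree n I m \<longleftrightarrow> m \<in> mingens I \<and>
     (\<forall>g\<in>mingens I. mdeg n g = mdeg n m \<longrightarrow> g \<noteq> m \<longrightarrow> lex_less m g)"

definition expandable :: "nat \<Rightarrow> (nat \<Rightarrow> nat) set \<Rightarrow> (nat \<Rightarrow> nat) \<Rightarrow> bool" where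
  "expandable n I g \<longleftrightarrow> g \<in> mingens I \<and>
     (\<forall>i. i + 1 < n \<longrightarrow> 0 < g i \<longrightarrow>
        (g(i := g i - 1, Suc i := g (Suc i) + 1)) \<notin> mingens I)"

definition mmax :: "nat \<Rightarrow> (nat \<Rightarrow> nat) \<Rightarrow> nat" where
  "mmax n g = Max {i. i \<le> n \<and> 0 < g i}"

text \<open>Expansion of I at g:  <I \ <g>> + <g x_j : max g <= j <= n-1>
  (I \ <g> taken as the set of monomials of I not divisible by g).\<close>
definition expansion :: "nat \<Rightarrow> (nat \<Rightarrow> nat) set \<Rightarrow> (nat \<Rightarrow> nat) \<Rightarrow> (nat \<Rightarrow> nat) set" where
  "expansion n I g = mideal n ((I - mideal n {g}) \<union>
      {g(j := g j + 1) | j. mmax n g \<le> j \<and> j \<le> n - 1})"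

definition hilb :: "nat \<Rightarrow> (nat \<Rightarrow> nat) set \<Rightarrow> nat \<Rightarrow> nat" where
  "hilb n J t = card {a \<in> monoms n. mdeg n a = t \<and> a \<notin> J}"

definition Kfps :: "nat \<Rightarrow> (nat \<Rightarrow> nat) set \<Rightarrow> int fps" where
  "Kfps n J = Abs_fps (\<lambda>t. int (hilb n J t)) * (1 - fps_X) ^ (n + 1)"

definition Kpoly :: "nat \<Rightarrow> (nat \<Rightarrow> nat) set \<Rightarrow> int poly" where
  "Kpoly n J = (THE q. fps_of_poly q = Kfps n J)"

end

theory Submission
  imports Defs "HOL-Library.FuncSet"
begin

text \<open>
  Write q = n - (d + 1) and c_p for the exponent of x_p in the last generator F. The minimal
  generators of L^p_n are x_0, ..., x_(q-1), some of the monomials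
  G_v = x_q^(c_q) ... x_(v-1)^(c_(v-1)) x_v^(c_v + 1), and F. Part (i) is a case analysis of which
  moves x_i \<mapsto> x_(i+1) turn a generator into another one of the same degree, which is then
  lexicographically smaller.

  The degree statements rest on the Eliahou--Kervaire decomposition: in a strongly stable ideal J
  every monomial is uniquely g w with g a minimal generator and w a monomial in x_(max g), ..., x_n,
  hence K_J = 1 - \<Sum>_g T^(deg g) (1 - T)^(max g) and deg K_J is governed by the generators
  maximizing deg g + max g. The expansion at an expandable m \<noteq> F is again strongly stable, and its
  minimal generators are old ones or m x_j; since deg m < deg F all have degree at most deg F and
  max at most n - 1, so deg K < deg F + n. In L^(1+p)_n the last generator F x_(n-1) alone attains
  deg g + max g = deg F + n.
\<close>

section \<open>Monomials\<close>

lemma finite_bounded_monoms: "finite {w::nat\<Rightarrow>nat. \<forall>i. w i \<le> t \<and> (n < i \<longrightarrow> w i = 0)}"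
proof -
  have "{w::nat\<Rightarrow>nat. \<forall>i. w i \<le> t \<and> (n < i \<longrightarrow> w i = 0)}
     \<subseteq> (\<lambda>f i. if i \<le> n then f i else 0) ` ({..n} \<rightarrow>\<^sub>E {..t})"
  proof
    fix w :: "nat \<Rightarrow> nat" assume w: "w \<in> {w. \<forall>i. w i \<le> t \<and> (n < i \<longrightarrow> w i = 0)}"
    then have "w = (\<lambda>i. if i \<le> n then restrict w {..n} i else 0)"
      by (auto simp: fun_eq_iff)
    moreover have "restrict w {..n} \<in> {..n} \<rightarrow>\<^sub>E {..t}" using w by auto
    ultimately show "w \<in> (\<lambda>f i. if i \<le> n then f i else 0) ` ({..n} \<rightarrow>\<^sub>E {..t})" by blast
  qed
  then show ?thesis by (rule finite_subset) (auto intro: finite_PiE)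
qed

lemma monoms_nonzero_le: "a \<in> monoms n \<Longrightarrow> a i \<noteq> 0 \<Longrightarrow> i \<le> n"
  by (rule ccontr) (auto simp: monoms_def)

lemma monoms_fun_upd_pred: "a \<in> monoms n \<Longrightarrow> a(k := a k - 1) \<in> monoms n"
  by (auto simp: monoms_def)

lemma monoms_le_mdeg: "w \<in> monoms n \<Longrightarrow> w i \<le> mdeg n w"
  unfolding monoms_def mdeg_def by (cases "i \<le> n") (auto intro: member_le_sum)

lemma finite_monoms_mdeg: "finite {w \<in> monoms n. mdeg n w = t}"
  by (rule finite_subset[OF _ finite_bounded_monoms[of t n]])
     (auto simp: monoms_le_mdeg, auto simp: monoms_def)

lemma mdeg_add: "mdeg n (\<lambda>i. a i + b i) = mdeg n a + mdeg n b"
  by (simp add: mdeg_def sum.distrib)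

lemma mdeg_mono: "a \<le> b \<Longrightarrow> mdeg n a \<le> mdeg n b"
  unfolding mdeg_def by (intro sum_mono) (simp add: le_fun_def)

lemma mdeg_fun_upd_Suc: "j \<le> n \<Longrightarrow> mdeg n (a(j := Suc (a j))) = Suc (mdeg n a)"
  using mdeg_add[of n a "var j"] by (simp add: mdeg_def var_def sum.delta fun_upd_def if_distrib cong: if_cong)

lemma mdeg_fun_upd_pred: "j \<le> n \<Longrightarrow> 0 < a j \<Longrightarrow> Suc (mdeg n (a(j := a j - 1))) = mdeg n a"
  using mdeg_fun_upd_Suc[of j n "a(j := a j - 1)"] by (simp add: fun_upd_idem_iff)

lemma mdeg_var: "j \<le> n \<Longrightarrow> mdeg n (var j) = 1"
  by (simp add: mdeg_def var_def)

lemma var_apply: "var i p = (if p = i then 1 else 0)"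
  by (simp add: var_def)

lemma mmax_props:
  assumes "g \<in> monoms n" "g \<noteq> (\<lambda>_. 0)"
  shows "mmax n g \<le> n" "0 < g (mmax n g)" "\<And>j. 0 < g j \<Longrightarrow> j \<le> mmax n g"
    "\<And>j. mmax n g < j \<Longrightarrow> g j = 0"
proof -
  obtain i where i: "g i \<noteq> 0" using assms(2) by auto
  then have "i \<le> n" using assms(1) monoms_nonzero_le by blast
  have fin: "finite {i. i \<le> n \<and> 0 < g i}" by simp
  have ne: "{i. i \<le> n \<and> 0 < g i} \<noteq> {}" using i \<open>i \<le> n\<close> by auto
  have "mmax n g \<in> {i. i \<le> n \<and> 0 < g i}" unfolding mmax_def using Max_in[OF fin ne] .
  then show "mmax n g \<le> n" "0 < g (mmax n g)" by auto
  show ge: "j \<le> mmax n g" if "0 < g j" for j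
  proof -
    have "j \<le> n" using that assms(1) monoms_nonzero_le by blast
    then show ?thesis unfolding mmax_def using that by (intro Max_ge[OF fin]) auto
  qed
  show "g j = 0" if "mmax n g < j" for j using ge[of j] that by fastforce
qed

lemma mmax_eqI:
  assumes "g \<in> monoms n" "0 < g k" "\<And>j. k < j \<Longrightarrow> g j = 0"
  shows "mmax n g = k"
proof -
  have nz: "g \<noteq> (\<lambda>_. 0)" using assms(2) by auto
  note mp = mmax_props[OF assms(1) nz]
  have "k \<le> mmax n g" using mp(3) assms(2) by simp
  moreover have "mmax n g \<le> k" using mp(2) assms(3) by (metis not_le less_irrefl)
  ultimately show ?thesis by simp
qed

lemma mmax_le:
  assumes "g \<in> monoms n" "g \<noteq> (\<lambda>_. 0)" "\<And>p. b < p \<Longrightarrow> g p = 0"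
  shows "mmax n g \<le> b"
  using mmax_props(2)[OF assms(1,2)] assms(3) by (metis not_le less_irrefl)

lemma lex_less_asym: "lex_less a b \<Longrightarrow> \<not> lex_less b a"
  unfolding lex_less_def by (metis less_asym linorder_neqE_nat)

abbreviation move_right :: "(nat \<Rightarrow> nat) \<Rightarrow> nat \<Rightarrow> nat \<Rightarrow> nat" where
  "move_right g i \<equiv> g(i := g i - 1, Suc i := g (Suc i) + 1)"

lemma mdeg_move_right: "Suc i \<le> n \<Longrightarrow> 0 < g i \<Longrightarrow> mdeg n (move_right g i) = mdeg n g"
  using mdeg_fun_upd_Suc[of "Suc i" n "g(i := g i - 1)"] mdeg_fun_upd_pred[of i n g] by simp

lemma lex_less_move_right: "0 < g i \<Longrightarrow> lex_less (move_right g i) g"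
  unfolding lex_less_def by (intro exI[of _ i]) auto

lemma move_right_mingens_not_smallest_of_degree:
  assumes "move_right g i \<in> mingens J" "0 < g i" "Suc i \<le> n"
  shows "\<not> smallest_of_degree n J g"
proof
  assume "smallest_of_degree n J g"
  moreover have "move_right g i \<noteq> g"
  proof
    assume "move_right g i = g"
    then have "move_right g i i = g i" by simp
    then show False using assms(2) by simp
  qed
  ultimately have "lex_less g (move_right g i)"
    using assms mdeg_move_right by (auto simp: smallest_of_degree_def)
  then show False using lex_less_asym lex_less_move_right[of g i, OF assms(2)] by blast
qed

definition monoms_from :: "nat \<Rightarrow> nat \<Rightarrow> nat \<Rightarrow> (nat \<Rightarrow> nat) set" where
  "monoms_from n a t = {w \<in> monoms n. (\<forall>p<a. w p = 0) \<and> mdeg n w = t}"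

lemma finite_monoms_from: "finite (monoms_from n a t)"
  by (rule finite_subset[OF _ finite_monoms_mdeg[of n t]]) (auto simp: monoms_from_def)

lemma monoms_from_above: "monoms_from n (Suc n) t = (if t = 0 then {\<lambda>_. 0} else {})"
proof -
  have "w \<in> monoms_from n (Suc n) t \<longleftrightarrow> w = (\<lambda>_. 0) \<and> t = 0" for w
  proof
    assume w: "w \<in> monoms_from n (Suc n) t"
    then have "w i = 0" for i by (cases "i \<le> n") (auto simp: monoms_from_def monoms_def)
    then show "w = (\<lambda>_. 0) \<and> t = 0" using w by (auto simp: monoms_from_def mdeg_def)
  qed (auto simp: monoms_from_def monoms_def mdeg_def)
  then show ?thesis by auto
qed

lemma monoms_from_0: "monoms_from n a 0 = {\<lambda>_. 0}"
proof -
  have "w = (\<lambda>_. 0)" if "w \<in> monoms_from n a 0" for w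
    using that monoms_le_mdeg[of w n] by (auto simp: monoms_from_def)
  then show ?thesis by (auto simp: monoms_from_def monoms_def mdeg_def)
qed

lemma monoms_from_Suc:
  assumes "a \<le> n"
  shows "monoms_from n a (Suc t)
      = monoms_from n (Suc a) (Suc t) \<union> (\<lambda>w. w(a := Suc (w a))) ` monoms_from n a t"
proof (intro equalityI subsetI)
  fix w assume w: "w \<in> monoms_from n a (Suc t)"
  show "w \<in> monoms_from n (Suc a) (Suc t) \<union> (\<lambda>w. w(a := Suc (w a))) ` monoms_from n a t"
  proof (cases "w a = 0")
    case True
    then show ?thesis using w by (auto simp: monoms_from_def less_Suc_eq)
  next
    case False
    define v where "v = w(a := w a - 1)"
    have "w = v(a := Suc (v a))" using False by (auto simp: v_def fun_eq_iff)
    moreover have "v \<in> monoms_from n a t"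
      using w assms False mdeg_fun_upd_pred[of a n w]
      by (auto simp: monoms_from_def v_def monoms_def)
    ultimately show ?thesis by blast
  qed
qed (use assms in \<open>auto simp: monoms_from_def monoms_def mdeg_fun_upd_Suc\<close>)

lemma card_monoms_from_Suc:
  assumes "a \<le> n"
  shows "card (monoms_from n a (Suc t)) = card (monoms_from n (Suc a) (Suc t)) + card (monoms_from n a t)"
proof -
  have inj: "inj_on (\<lambda>w. w(a := Suc (w a))) (monoms_from n a t)"
    by (rule inj_onI) (metis fun_upd_idem_iff fun_upd_same fun_upd_upd nat.inject)
  have "monoms_from n (Suc a) (Suc t) \<inter> (\<lambda>w. w(a := Suc (w a))) ` monoms_from n a t = {}"
    by (auto simp: monoms_from_def)
  then show ?thesis
    using monoms_from_Suc[OF assms] card_Un_disjoint[OF finite_monoms_from finite_imageI[OF finite_monoms_from]]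
      card_image[OF inj] by simp
qed

definition monoms_from_series :: "nat \<Rightarrow> nat \<Rightarrow> int fps" where
  "monoms_from_series n a = Abs_fps (\<lambda>t. int (card (monoms_from n a t)))"

lemma monoms_from_series_mult:
  assumes "a \<le> n"
  shows "monoms_from_series n a * (1 - fps_X) = monoms_from_series n (Suc a)"
proof (rule fps_ext)
  fix t
  have "(monoms_from_series n a * (1 - fps_X)) $ t
      = monoms_from_series n a $ t - (fps_X * monoms_from_series n a) $ t"
    by (simp add: algebra_simps)
  then show "(monoms_from_series n a * (1 - fps_X)) $ t = monoms_from_series n (Suc a) $ t"
    using card_monoms_from_Suc[OF assms]
    by (cases t) (simp_all add: monoms_from_series_def monoms_from_0 monoms_from_above)
qed

lemma monoms_from_series_mult_power:
  assumes "a \<le> Suc n"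
  shows "monoms_from_series n a * (1 - fps_X) ^ (Suc n - a) = 1"
  using assms
proof (induction "Suc n - a" arbitrary: a)
  case 0
  then have "a = Suc n" by simp
  then show ?case by (auto simp: monoms_from_series_def monoms_from_above fps_eq_iff)
next
  case (Suc k)
  then have a: "a \<le> n" "Suc n - Suc a = k" by auto
  have "monoms_from_series n a * (1 - fps_X) ^ (Suc n - a)
      = (monoms_from_series n a * (1 - fps_X)) * (1 - fps_X) ^ k"
    using Suc.hyps(2)[symmetric] by (simp add: algebra_simps)
  also have "\<dots> = 1" using monoms_from_series_mult[OF a(1)] Suc.hyps(1)[of "Suc a"] a by simp
  finally show ?case .
qed

section \<open>The Eliahou--Kervaire decomposition\<close>

definition strongly_stable :: "nat \<Rightarrow> (nat \<Rightarrow> nat) set \<Rightarrow> bool" where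
  "strongly_stable n J \<longleftrightarrow>
     (\<forall>u\<in>J. \<forall>i j. i < j \<longrightarrow> 0 < u j \<longrightarrow> u(j := u j - 1, i := u i + 1) \<in> J)"

text \<open>The monomials g w with w a monomial in x_(max g), ..., x_n: for the minimal generators g
  of a strongly stable ideal these cones partition the ideal (Eliahou--Kervaire).\<close>

definition ek_cone :: "nat \<Rightarrow> (nat \<Rightarrow> nat) \<Rightarrow> nat \<Rightarrow> (nat \<Rightarrow> nat) set" where
  "ek_cone n g t = {a \<in> monoms n. mdeg n a = t \<and> g \<le> a \<and> (\<forall>p<mmax n g. a p = g p)}"

lemma ek_cone_eq_image:
  assumes "g \<in> monoms n" "mdeg n g \<le> t"
  shows "ek_cone n g t = (\<lambda>w i. g i + w i) ` monoms_from n (mmax n g) (t - mdeg n g)"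
proof (intro equalityI subsetI)
  fix a assume a: "a \<in> ek_cone n g t"
  define w where "w = (\<lambda>i. a i - g i)"
  have ag: "a = (\<lambda>i. g i + w i)" using a by (auto simp: ek_cone_def w_def le_fun_def fun_eq_iff)
  then have "mdeg n a = mdeg n g + mdeg n w" using mdeg_add[of n g w] by simp
  then have "w \<in> monoms_from n (mmax n g) (t - mdeg n g)"
    using a by (auto simp: monoms_from_def ek_cone_def w_def monoms_def)
  then show "a \<in> (\<lambda>w i. g i + w i) ` monoms_from n (mmax n g) (t - mdeg n g)" using ag by blast
next
  fix a assume "a \<in> (\<lambda>w i. g i + w i) ` monoms_from n (mmax n g) (t - mdeg n g)"
  then obtain w where w: "w \<in> monoms_from n (mmax n g) (t - mdeg n g)" and aw: "a = (\<lambda>i. g i + w i)"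
    by blast
  then show "a \<in> ek_cone n g t"
    using assms mdeg_add[of n g w] by (auto simp: ek_cone_def monoms_from_def monoms_def le_fun_def)
qed

lemma card_ek_cone:
  assumes "g \<in> monoms n"
  shows "card (ek_cone n g t)
    = (if t < mdeg n g then 0 else card (monoms_from n (mmax n g) (t - mdeg n g)))"
proof (cases "t < mdeg n g")
  case True
  then have "ek_cone n g t = {}" by (auto simp: ek_cone_def dest: mdeg_mono[of _ _ n])
  then show ?thesis using True by simp
next
  case False
  have "inj_on (\<lambda>w i. g i + w i) (monoms_from n (mmax n g) (t - mdeg n g))"
    by (rule inj_onI) (simp add: fun_eq_iff)
  then show ?thesis using False card_image ek_cone_eq_image[OF assms] by simp
qed

lemma le_or_ge_if_agree_below_mmax:
  assumes g: "g \<in> monoms n" "g \<noteq> (\<lambda>_. 0)" "g \<le> a" "\<forall>p<mmax n g. a p = g p"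
    and h: "h \<in> monoms n" "h \<noteq> (\<lambda>_. 0)" "h \<le> a" "\<forall>p<mmax n h. a p = h p"
    and le: "mmax n g \<le> mmax n h"
  shows "g \<le> h \<or> h \<le> g"
proof (cases "g (mmax n g) \<le> h (mmax n g)")
  case True
  have "g p \<le> h p" for p
    using mmax_props(4)[OF g(1,2), of p] g(4) h(4) le True
    by (cases p "mmax n g" rule: linorder_cases) auto
  then show ?thesis by (simp add: le_fun_def)
next
  case False
  have "g (mmax n g) \<le> a (mmax n g)" using g(3) by (simp add: le_fun_def)
  then have "\<not> mmax n g < mmax n h"
    using False h(4) by auto
  then have "mmax n h = mmax n g" using le by simp
  then have "h p \<le> g p" for p
    using mmax_props(4)[OF h(1,2), of p] g(4) h(4) False
    by (cases p "mmax n g" rule: linorder_cases) auto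
  then show ?thesis by (simp add: le_fun_def)
qed

locale monomial_ideal =
  fixes n :: nat and J :: "(nat \<Rightarrow> nat) set"
  assumes subset_monoms: "J \<subseteq> monoms n"
    and upward_closed: "\<And>a b. a \<in> J \<Longrightarrow> b \<in> monoms n \<Longrightarrow> a \<le> b \<Longrightarrow> b \<in> J"
    and one_notin: "(\<lambda>_. 0) \<notin> J"
begin

lemma nonzero: "a \<in> J \<Longrightarrow> a \<noteq> (\<lambda>_. 0)"
  using one_notin by auto

lemma mingens_le_eq: "g \<in> mingens J \<Longrightarrow> h \<in> J \<Longrightarrow> h \<le> g \<Longrightarrow> h = g"
  by (auto simp: mingens_def)

lemma mingens_fun_upd_pred_notin:
  assumes "g \<in> mingens J" "0 < g k"
  shows "g(k := g k - 1) \<notin> J"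
proof
  assume "g(k := g k - 1) \<in> J"
  then have "g(k := g k - 1) = g" using mingens_le_eq[OF assms(1)] by (auto simp: le_fun_def)
  then show False using assms(2) by (metis fun_upd_same diff_less less_irrefl zero_less_one)
qed

lemma ek_decomposition_unique:
  assumes "g \<in> mingens J" "g \<le> a" "\<forall>p<mmax n g. a p = g p"
    and "h \<in> mingens J" "h \<le> a" "\<forall>p<mmax n h. a p = h p"
  shows "g = h"
proof -
  have J: "g \<in> J" "h \<in> J" using assms(1,4) by (auto simp: mingens_def)
  note gh = le_or_ge_if_agree_below_mmax[OF _ nonzero[OF J(1)] assms(2,3) _ nonzero[OF J(2)] assms(5,6)]
    and hg = le_or_ge_if_agree_below_mmax[OF _ nonzero[OF J(2)] assms(5,6) _ nonzero[OF J(1)] assms(2,3)]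
  have "g \<le> h \<or> h \<le> g"
  proof (cases "mmax n g \<le> mmax n h")
    case True then show ?thesis using gh J subset_monoms by blast
  next
    case False then show ?thesis using hg J subset_monoms by auto
  qed
  then show ?thesis using mingens_le_eq assms(1,4) J by blast
qed

end

locale strongly_stable_ideal = monomial_ideal +
  assumes strongly_stable: "strongly_stable n J"
begin

lemma move_left_mem: "u \<in> J \<Longrightarrow> i < j \<Longrightarrow> 0 < u j \<Longrightarrow> u(j := u j - 1, i := u i + 1) \<in> J"
  using strongly_stable unfolding strongly_stable_def by blast

text \<open>By stability any factor of g can be traded for one of x_(max g), so minimality only needs
  to be tested there.\<close>

lemma mingens_iff_pred_mmax_notin:
  "g \<in> mingens J \<longleftrightarrow> g \<in> J \<and> g(mmax n g := g (mmax n g) - 1) \<notin> J"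
proof (intro iffI conjI)
  assume "g \<in> mingens J"
  then show "g \<in> J" "g(mmax n g := g (mmax n g) - 1) \<notin> J"
    using mingens_fun_upd_pred_notin mmax_props(2) subset_monoms nonzero by (auto simp: mingens_def)
next
  assume g: "g \<in> J \<and> g(mmax n g := g (mmax n g) - 1) \<notin> J"
  then have gm: "g \<in> monoms n" using subset_monoms by auto
  note gp = mmax_props[OF gm nonzero[of g]]
  have "h = g" if h: "h \<in> J" "h \<le> g" for h
  proof (rule ccontr)
    assume "h \<noteq> g"
    then obtain j where "h j \<noteq> g j" by (auto simp: fun_eq_iff)
    then have hj: "h j < g j" using h(2) by (metis le_fun_def order_le_neq_trans)
    have "g(j := g j - 1) \<in> monoms n" using gm by (auto simp: monoms_def)
    moreover have "h \<le> g(j := g j - 1)" using h(2) hj by (auto simp: le_fun_def)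
    ultimately have gj: "g(j := g j - 1) \<in> J" using upward_closed[OF h(1)] by blast
    have "j \<le> mmax n g" using gp(3)[of j] hj g by simp
    show False
    proof (cases "j = mmax n g")
      case True then show False using gj g by simp
    next
      case False
      then have "(g(j := g j - 1))(mmax n g := g (mmax n g) - 1, j := (g(j := g j - 1)) j + 1) \<in> J"
        using move_left_mem[OF gj, of j "mmax n g"] \<open>j \<le> mmax n g\<close> gp(2) g by simp
      moreover have "(g(j := g j - 1))(mmax n g := g (mmax n g) - 1, j := (g(j := g j - 1)) j + 1)
          = g(mmax n g := g (mmax n g) - 1)"
        using hj False by (auto simp: fun_eq_iff)
      ultimately show False using g by simp
    qed
  qed
  then show "g \<in> mingens J" using g by (auto simp: mingens_def)
qed

lemma move_right_mingens:
  assumes g: "g \<in> mingens J" "0 < g i" and moved: "move_right g i \<in> J"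
  shows "move_right g i \<in> mingens J"
proof -
  define u where "u = move_right g i"
  have "h = u" if h: "h \<in> J" "h \<le> u" for h
  proof (rule ccontr)
    assume "h \<noteq> u"
    then obtain k where "h k \<noteq> u k" by (auto simp: fun_eq_iff)
    then have hk: "h k < u k" using h(2) by (metis le_fun_def order_le_neq_trans)
    define w where "w = u(k := u k - 1)"
    have "u \<in> monoms n" using moved subset_monoms by (auto simp: u_def)
    then have "w \<in> monoms n" unfolding w_def by (rule monoms_fun_upd_pred)
    moreover have "h \<le> w" unfolding le_fun_def w_def
    proof
      fix x show "h x \<le> (u(k := u k - 1)) x" using le_funD[OF h(2), of x] hk by (cases "x = k") auto
    qed
    ultimately have wJ: "w \<in> J" using upward_closed[OF h(1)] by blast
    show False
    proof (cases "k = Suc i")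
      case True
      then have "w = g(i := g i - 1)" by (auto simp: fun_eq_iff w_def u_def)
      then show False using wJ mingens_fun_upd_pred_notin[OF g] by simp
    next
      case False
      have "0 < w (Suc i)" using False by (simp add: w_def u_def)
      then have "w(Suc i := w (Suc i) - 1, i := w i + 1) \<in> J" using move_left_mem[OF wJ] by simp
      moreover have "w(Suc i := w (Suc i) - 1, i := w i + 1) = g(k := g k - 1)"
        using False hk g(2) by (auto simp: fun_eq_iff w_def u_def split: if_splits)
      moreover have "0 < g k" using hk False by (auto simp: u_def split: if_splits)
      ultimately show False using mingens_fun_upd_pred_notin[OF g(1)] by simp
    qed
  qed
  then show ?thesis using moved by (auto simp: mingens_def u_def)
qed

lemma ek_decomposition_exists:
  "a \<in> J \<Longrightarrow> \<exists>g\<in>mingens J. g \<le> a \<and> (\<forall>p<mmax n g. a p = g p)"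
proof (induction "mdeg n a" arbitrary: a rule: less_induct)
  case less
  show ?case
  proof (cases "a \<in> mingens J")
    case False
    define a' where "a' = a(mmax n a := a (mmax n a) - 1)"
    have am: "a \<in> monoms n" using less.prems subset_monoms by auto
    note mp = mmax_props[OF am nonzero[OF less.prems]]
    have a'J: "a' \<in> J" using False less.prems by (auto simp: mingens_iff_pred_mmax_notin a'_def)
    have "Suc (mdeg n a') = mdeg n a" using mdeg_fun_upd_pred mp(1,2) by (simp add: a'_def)
    then obtain g where g: "g \<in> mingens J" "g \<le> a'" "\<forall>p<mmax n g. a' p = g p"
      using less.hyps[OF _ a'J] by auto
    have "a' \<le> a" by (auto simp: a'_def le_fun_def)
    then have ga: "g \<le> a" using g(2) by simp
    have "g \<in> J" using g(1) by (auto simp: mingens_def)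
    then have "0 < g (mmax n g)" using mmax_props(2) subset_monoms nonzero by auto
    then have "0 < a (mmax n g)" using ga by (simp add: le_fun_def) (metis less_le_trans)
    then have "mmax n g \<le> mmax n a" using mp(3) by simp
    then have "\<forall>p<mmax n g. a p = g p" using g(3) by (auto simp: a'_def)
    then show ?thesis using g(1) ga by blast
  qed auto
qed

lemma ideal_monoms_mdeg_eq_Union:
  "{a \<in> monoms n. mdeg n a = t \<and> a \<in> J} = (\<Union>g\<in>mingens J. ek_cone n g t)"
proof (intro equalityI subsetI)
  fix a assume "a \<in> (\<Union>g\<in>mingens J. ek_cone n g t)"
  then show "a \<in> {a \<in> monoms n. mdeg n a = t \<and> a \<in> J}"
    using upward_closed by (auto simp: ek_cone_def mingens_def)
qed (use ek_decomposition_exists in \<open>force simp: ek_cone_def\<close>)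

lemma card_ideal_monoms_mdeg:
  assumes "finite (mingens J)"
  shows "card {a \<in> monoms n. mdeg n a = t \<and> a \<in> J}
     = (\<Sum>g\<in>mingens J. if t < mdeg n g then 0 else card (monoms_from n (mmax n g) (t - mdeg n g)))"
proof -
  have "card (\<Union>g\<in>mingens J. ek_cone n g t) = (\<Sum>g\<in>mingens J. card (ek_cone n g t))"
  proof (rule card_UN_disjoint[OF assms])
    show "\<forall>g\<in>mingens J. finite (ek_cone n g t)"
      by (auto intro: finite_subset[OF _ finite_monoms_mdeg[of n t]] simp: ek_cone_def)
    show "\<forall>g\<in>mingens J. \<forall>h\<in>mingens J. g \<noteq> h \<longrightarrow> ek_cone n g t \<inter> ek_cone n h t = {}"
      using ek_decomposition_unique by (auto simp: ek_cone_def)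
  qed
  moreover have "g \<in> monoms n" if "g \<in> mingens J" for g
    using that subset_monoms by (auto simp: mingens_def)
  ultimately show ?thesis using card_ek_cone ideal_monoms_mdeg_eq_Union by simp
qed

lemma hilbert_series_eq:
  assumes "finite (mingens J)"
  shows "Abs_fps (\<lambda>t. int (hilb n J t))
      = monoms_from_series n 0 - (\<Sum>g\<in>mingens J. fps_X ^ mdeg n g * monoms_from_series n (mmax n g))"
proof (rule fps_ext)
  fix t
  have sub: "{a \<in> monoms n. mdeg n a = t \<and> a \<in> J} \<subseteq> monoms_from n 0 t"
    by (auto simp: monoms_from_def)
  have "{a \<in> monoms n. mdeg n a = t \<and> a \<notin> J} = monoms_from n 0 t - {a \<in> monoms n. mdeg n a = t \<and> a \<in> J}"
    by (auto simp: monoms_from_def)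
  then have "int (hilb n J t)
      = int (card (monoms_from n 0 t)) - int (card {a \<in> monoms n. mdeg n a = t \<and> a \<in> J})"
    unfolding hilb_def using card_Diff_subset[OF finite_subset[OF sub finite_monoms_from] sub]
      card_mono[OF finite_monoms_from sub] by simp
  also have "\<dots> = monoms_from_series n 0 $ t
      - (\<Sum>g\<in>mingens J. (fps_X ^ mdeg n g * monoms_from_series n (mmax n g)) $ t)"
    unfolding card_ideal_monoms_mdeg[OF assms] of_nat_sum
    by (auto simp: monoms_from_series_def fps_X_power_mult_nth intro!: sum.cong)
  finally show "Abs_fps (\<lambda>t. int (hilb n J t)) $ t = (monoms_from_series n 0
      - (\<Sum>g\<in>mingens J. fps_X ^ mdeg n g * monoms_from_series n (mmax n g))) $ t"
    by (simp add: fps_sum_nth)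
qed

lemma Kfps_eq:
  assumes fin: "finite (mingens J)"
  shows "Kfps n J = 1 - (\<Sum>g\<in>mingens J. fps_X ^ mdeg n g * (1 - fps_X) ^ mmax n g)"
proof -
  have T: "fps_X ^ mdeg n g * monoms_from_series n (mmax n g) * (1 - fps_X) ^ (n + 1)
      = fps_X ^ mdeg n g * (1 - fps_X) ^ mmax n g" if "g \<in> mingens J" for g
  proof -
    have mx: "mmax n g \<le> n"
      using mmax_props(1)[of g n] that subset_monoms nonzero by (auto simp: mingens_def)
    then have "(1 - fps_X :: int fps) ^ (n + 1) = (1 - fps_X) ^ (Suc n - mmax n g) * (1 - fps_X) ^ mmax n g"
      by (simp add: power_add[symmetric])
    then have "fps_X ^ mdeg n g * monoms_from_series n (mmax n g) * (1 - fps_X) ^ (n + 1)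
        = fps_X ^ mdeg n g * (monoms_from_series n (mmax n g) * (1 - fps_X) ^ (Suc n - mmax n g))
          * (1 - fps_X) ^ mmax n g"
      by (simp add: mult.assoc)
    then show ?thesis using monoms_from_series_mult_power[of "mmax n g" n] mx by simp
  qed
  have "Kfps n J = monoms_from_series n 0 * (1 - fps_X) ^ (Suc n - 0)
      - (\<Sum>g\<in>mingens J. fps_X ^ mdeg n g * monoms_from_series n (mmax n g) * (1 - fps_X) ^ (n + 1))"
    unfolding Kfps_def hilbert_series_eq[OF fin] by (simp add: left_diff_distrib sum_distrib_right)
  also have "\<dots> = 1 - (\<Sum>g\<in>mingens J. fps_X ^ mdeg n g * (1 - fps_X) ^ mmax n g)"
    using monoms_from_series_mult_power[of 0 n] by (simp only: T cong: sum.cong)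
  finally show ?thesis .
qed

lemma Kpoly_eq:
  assumes "finite (mingens J)"
  shows "Kpoly n J = 1 - (\<Sum>g\<in>mingens J. monom 1 (mdeg n g) * [:1, -1:] ^ mmax n g)"
proof -
  have X: "fps_of_poly [:1, -1:] = (1 - fps_X :: int fps)"
    by (rule fps_ext) (auto simp: coeff_pCons split: nat.split)
  have "Kfps n J = fps_of_poly (1 - (\<Sum>g\<in>mingens J. monom 1 (mdeg n g) * [:1, -1:] ^ mmax n g))"
    unfolding Kfps_eq[OF assms]
    by (simp add: X fps_of_poly_diff fps_of_poly_sum fps_of_poly_mult fps_of_poly_power fps_of_poly_monom')
  then show ?thesis unfolding Kpoly_def by (metis (mono_tags, lifting) fps_of_poly_eq_iff the_equality)
qed

lemma coeff_ek_term_above: "s + a < k \<Longrightarrow> coeff (monom 1 s * [:1, -1:] ^ a :: int poly) k = 0"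
  by (simp add: coeff_monom_mult coeff_eq_0 degree_power_eq)

lemma coeff_ek_term_top: "coeff (monom 1 s * [:1, -1:] ^ a :: int poly) (s + a) = (-1) ^ a"
  using lead_coeff_power[of "[:1, -1:] :: int poly" a] by (simp add: coeff_monom_mult degree_power_eq)

text \<open>The term of a generator g has degree deg g + max g, so the degree of the K-polynomial
  is governed by the generators maximizing deg g + max g.\<close>

lemma degree_Kpoly_less:
  assumes "finite (mingens J)" "0 < k" "\<And>g. g \<in> mingens J \<Longrightarrow> mdeg n g + mmax n g < k"
  shows "degree (Kpoly n J) < k"
proof -
  have "coeff (Kpoly n J) k' = 0" if "k \<le> k'" for k'
  proof -
    have "coeff (monom 1 (mdeg n g) * [:1, -1:] ^ mmax n g :: int poly) k' = 0" if "g \<in> mingens J" for g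
      using assms(3)[OF that] \<open>k \<le> k'\<close> by (intro coeff_ek_term_above) linarith
    then show ?thesis using assms(2) that by (simp add: Kpoly_eq[OF assms(1)] coeff_diff coeff_sum)
  qed
  then have "degree (Kpoly n J) \<le> k - 1" by (intro degree_le) auto
  then show ?thesis using assms(2) by simp
qed

lemma degree_Kpoly_ge:
  assumes "finite (mingens J)" "f \<in> mingens J" "0 < mdeg n f + mmax n f"
    and "\<And>g. g \<in> mingens J \<Longrightarrow> g \<noteq> f \<Longrightarrow> mdeg n g + mmax n g < mdeg n f + mmax n f"
  shows "mdeg n f + mmax n f \<le> degree (Kpoly n J)"
proof (rule le_degree)
  let ?k = "mdeg n f + mmax n f"
  have "coeff (Kpoly n J) ?k = - (\<Sum>g\<in>mingens J. coeff (monom 1 (mdeg n g) * [:1, -1:] ^ mmax n g) ?k)"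
    using assms(3) by (simp add: Kpoly_eq[OF assms(1)] coeff_diff coeff_sum)
  also have "\<dots> = - coeff (monom 1 (mdeg n f) * [:1, -1:] ^ mmax n f) ?k"
    using assms by (subst sum.remove[OF assms(1,2)]) (auto simp: coeff_ek_term_above intro!: sum.neutral)
  also have "\<dots> = - ((-1) ^ mmax n f)"
    by (simp add: coeff_ek_term_top)
  finally show "coeff (Kpoly n J) ?k \<noteq> 0" by simp
qed

end

section \<open>Ideals generated by monomials\<close>

lemma mideal_subset_monoms: "mideal n S \<subseteq> monoms n"
  by (auto simp: mideal_def)

lemma mideal_upward_closed: "a \<in> mideal n S \<Longrightarrow> b \<in> monoms n \<Longrightarrow> a \<le> b \<Longrightarrow> b \<in> mideal n S"
  by (auto simp: mideal_def intro: order.trans)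

lemma generators_subset_mideal: "S \<subseteq> monoms n \<Longrightarrow> S \<subseteq> mideal n S"
  by (auto simp: mideal_def)

lemma mingens_mideal:
  assumes "S \<subseteq> monoms n"
  shows "mingens (mideal n S) = {s\<in>S. \<forall>t\<in>S. t \<le> s \<longrightarrow> t = s}"
proof (intro equalityI subsetI)
  fix a assume a: "a \<in> mingens (mideal n S)"
  then have amin: "\<And>b. b \<in> mideal n S \<Longrightarrow> b \<le> a \<Longrightarrow> b = a" by (auto simp: mingens_def)
  obtain s where s: "s \<in> S" "s \<le> a" using a by (auto simp: mingens_def mideal_def)
  have "s = a" using amin[OF subsetD[OF generators_subset_mideal[OF assms] s(1)] s(2)] .
  then show "a \<in> {s\<in>S. \<forall>t\<in>S. t \<le> s \<longrightarrow> t = s}"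
    using s amin generators_subset_mideal[OF assms] by blast
next
  fix a assume a: "a \<in> {s\<in>S. \<forall>t\<in>S. t \<le> s \<longrightarrow> t = s}"
  have "b = a" if "b \<in> mideal n S" "b \<le> a" for b
  proof -
    from that(1) obtain t where t: "t \<in> S" "t \<le> b" unfolding mideal_def by blast
    then have "t = a" using a that(2) order.trans by blast
    then show ?thesis using t(2) that(2) by simp
  qed
  then show "a \<in> mingens (mideal n S)" using a generators_subset_mideal[OF assms] by (auto simp: mingens_def)
qed

lemma mingens_mideal_subset: "S \<subseteq> monoms n \<Longrightarrow> mingens (mideal n S) \<subseteq> S"
  using mingens_mideal by blast

lemma monomial_ideal_mideal:
  assumes "(\<lambda>_. 0) \<notin> S"
  shows "monomial_ideal n (mideal n S)"
proof
  show "(\<lambda>_. 0) \<notin> mideal n S"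
  proof
    assume "(\<lambda>_. 0) \<in> mideal n S"
    then obtain t where "t \<in> S" "t \<le> (\<lambda>_. 0)" by (auto simp: mideal_def)
    then have "t = (\<lambda>_. 0)" by (auto simp: le_fun_def fun_eq_iff)
    then show False using \<open>t \<in> S\<close> assms by simp
  qed
qed (auto simp: mideal_subset_monoms intro: mideal_upward_closed)

text \<open>Strong stability only has to be checked on generators: a move applied to a multiple
  of a generator either keeps it a multiple, or is a multiple of the moved generator.\<close>

lemma strongly_stable_mideal:
  assumes "S \<subseteq> monoms n"
    and gen: "\<And>g i j. g \<in> S \<Longrightarrow> i < j \<Longrightarrow> 0 < g j \<Longrightarrow> g(j := g j - 1, i := g i + 1) \<in> mideal n S"
  shows "strongly_stable n (mideal n S)"
  unfolding strongly_stable_def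
proof (intro ballI allI impI)
  fix u i j assume u: "u \<in> mideal n S" and ij: "i < j" "0 < u j"
  obtain g where g: "g \<in> S" "g \<le> u" using u by (auto simp: mideal_def)
  have um: "u \<in> monoms n" using u by (auto simp: mideal_def)
  have "j \<le> n" using monoms_nonzero_le[OF um] ij(2) by simp
  then have u'm: "u(j := u j - 1, i := u i + 1) \<in> monoms n" using um ij(1)
    by (auto simp: monoms_def)
  have gu: "\<And>p. g p \<le> u p" using g(2) by (simp add: le_fun_def)
  show "u(j := u j - 1, i := u i + 1) \<in> mideal n S"
  proof (cases "g j < u j")
    case True
    have "g \<le> u(j := u j - 1, i := u i + 1)" unfolding le_fun_def
    proof
      fix p show "g p \<le> (u(j := u j - 1, i := u i + 1)) p"
        using gu[of p] True ij(1) by (cases "p = i"; cases "p = j") auto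
    qed
    then show ?thesis using u'm g(1) by (auto simp: mideal_def)
  next
    case False
    then have eq: "g j = u j" using gu[of j] by simp
    have "g(j := g j - 1, i := g i + 1) \<le> u(j := u j - 1, i := u i + 1)" unfolding le_fun_def
    proof
      fix p show "(g(j := g j - 1, i := g i + 1)) p \<le> (u(j := u j - 1, i := u i + 1)) p"
        using gu[of p] eq ij(1) by (cases "p = i"; cases "p = j") auto
    qed
    moreover have "g(j := g j - 1, i := g i + 1) \<in> mideal n S"
      using gen[OF g(1) ij(1)] eq ij(2) by simp
    ultimately show ?thesis using mideal_upward_closed u'm by blast
  qed
qed

section \<open>Saturated lexicographic ideals\<close>

text \<open>Reindexing by the variable: with q = n - (d + 1) and c = lex_exponents n d e, so that
  c_p = a_(n-1-p) is the exponent of x_p, the generators of L^p_n are x_0, ..., x_(q-1), then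
  lex_gen q c v for q \<le> v < n - 1 and finally lex_last_gen n q c.\<close>

definition lex_exponents :: "nat \<Rightarrow> nat \<Rightarrow> (nat \<Rightarrow> nat) \<Rightarrow> nat \<Rightarrow> nat" where
  "lex_exponents n d e p = aa d e (n - Suc p)"

definition lex_gen :: "nat \<Rightarrow> (nat \<Rightarrow> nat) \<Rightarrow> nat \<Rightarrow> nat \<Rightarrow> nat" where
  "lex_gen q c v = (\<lambda>p. if q \<le> p \<and> p < v then c p else if p = v then c p + 1 else 0)"

definition lex_last_gen :: "nat \<Rightarrow> nat \<Rightarrow> (nat \<Rightarrow> nat) \<Rightarrow> nat \<Rightarrow> nat" where
  "lex_last_gen n q c = (\<lambda>p. if q \<le> p \<and> p < n then c p else 0)"

definition lex_gen_list :: "nat \<Rightarrow> nat \<Rightarrow> (nat \<Rightarrow> nat) \<Rightarrow> (nat \<Rightarrow> nat) list" where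
  "lex_gen_list n q c = map var [0..<q] @ map (lex_gen q c) [q..<n - 1] @ [lex_last_gen n q c]"

lemma ex_reversed_index_gt_iff:
  assumes "d < n" "j \<le> d"
  shows "(\<exists>i. j < i \<and> i \<le> d \<and> w = n - Suc i) \<longleftrightarrow> (n - Suc d \<le> w \<and> w < n - Suc j)"
proof
  assume "\<exists>i. j < i \<and> i \<le> d \<and> w = n - Suc i"
  then show "n - Suc d \<le> w \<and> w < n - Suc j" using assms by auto
next
  assume "n - Suc d \<le> w \<and> w < n - Suc j"
  then show "\<exists>i. j < i \<and> i \<le> d \<and> w = n - Suc i" using assms
    by (intro exI[of _ "n - Suc w"]) auto
qed

lemma ex_reversed_index_iff:
  assumes "d < n"
  shows "(\<exists>i. i \<le> d \<and> w = n - Suc i) \<longleftrightarrow> (n - Suc d \<le> w \<and> w < n)"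
proof
  assume "\<exists>i. i \<le> d \<and> w = n - Suc i"
  then show "n - Suc d \<le> w \<and> w < n" using assms by auto
next
  assume "n - Suc d \<le> w \<and> w < n"
  then show "\<exists>i. i \<le> d \<and> w = n - Suc i" using assms
    by (intro exI[of _ "n - Suc w"]) auto
qed

lemma lexgens_eq_lex_gen_list:
  assumes "d < n"
  shows "lexgens n d e = lex_gen_list n (n - Suc d) (lex_exponents n d e)"
proof -
  define q where "q = n - Suc d"
  define c where "c = lex_exponents n d e"
  have G: "map (lexgenG n d e) (rev [1..<Suc d]) = map (lex_gen q c) [q..<n - 1]"
  proof (rule nth_equalityI)
    show "length (map (lexgenG n d e) (rev [1..<Suc d])) = length (map (lex_gen q c) [q..<n - 1])"
      using assms by (simp add: q_def del: upt_Suc)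
  next
    fix k assume "k < length (map (lexgenG n d e) (rev [1..<Suc d]))"
    then have k: "k < d" by (simp del: upt_Suc)
    have r: "rev [1..<Suc d] ! k = d - k" using k by (simp add: rev_nth del: upt_Suc)
    have u: "[q..<n - 1] ! k = q + k" using k assms by (simp add: q_def)
    have "lexgenG n d e (d - k) = lex_gen q c (q + k)"
    proof
      fix w
      have e1: "n - Suc (d - k) = q + k" using k assms by (simp add: q_def)
      have e2: "n - Suc (q + k) = d - k" using k assms by (simp add: q_def)
      show "lexgenG n d e (d - k) w = lex_gen q c (q + k) w"
        unfolding lexgenG_def lex_gen_def ex_reversed_index_gt_iff[OF assms, of "d - k" w, simplified] e1
        using e2 by (auto simp: c_def q_def lex_exponents_def)
    qed
    then show "map (lexgenG n d e) (rev [1..<Suc d]) ! k = map (lex_gen q c) [q..<n - 1] ! k"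
      using k assms r u by (simp add: q_def del: upt_Suc)
  qed
  have F: "lexgenF n d e = lex_last_gen n q c"
  proof
    fix w show "lexgenF n d e w = lex_last_gen n q c w"
      unfolding lexgenF_def lex_last_gen_def ex_reversed_index_iff[OF assms]
      by (auto simp: c_def q_def lex_exponents_def)
  qed
  show ?thesis unfolding lexgens_def lex_gen_list_def G F q_def c_def by simp
qed

lemma sum_atMost_if_atLeastLessThan:
  assumes "b \<le> Suc n"
  shows "(\<Sum>i\<le>n. if a \<le> i \<and> i < b then (f i::nat) else 0) = (\<Sum>i\<in>{a..<b}. f i)"
proof -
  have "(\<Sum>i\<le>n. if a \<le> i \<and> i < b then f i else 0) = sum f {i\<in>{..n}. a \<le> i \<and> i < b}"
    by (rule sum.inter_filter[symmetric]) simp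
  also have "{i\<in>{..n}. a \<le> i \<and> i < b} = {a..<b}" using assms by auto
  finally show ?thesis .
qed

locale lex_ideal =
  fixes n q :: nat and c :: "nat \<Rightarrow> nat"
  assumes q_less: "q < n" and c_q_pos: "0 < c q"
begin

abbreviation "G \<equiv> lex_gen q c"
abbreviation "F \<equiv> lex_last_gen n q c"
abbreviation "gens \<equiv> set (lex_gen_list n q c)"
abbreviation "I \<equiv> mideal n gens"

definition csum :: "nat \<Rightarrow> nat \<Rightarrow> nat" where
  "csum a b = (\<Sum>p\<in>{a..<b}. c p)"

definition gen_indices :: "nat set" where
  "gen_indices = {v. q \<le> v \<and> v < n - 1 \<and> (\<exists>p. v < p \<and> p < n \<and> 0 < c p)}"

lemma G_apply: "G v p = (if q \<le> p \<and> p < v then c p else if p = v then c p + 1 else 0)"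
  by (simp add: lex_gen_def)

lemma F_apply: "F p = (if q \<le> p \<and> p < n then c p else 0)"
  by (simp add: lex_last_gen_def)

lemma gens_cases:
  assumes "t \<in> gens"
  obtains (var) j where "t = var j" "j < q" | (G) w where "t = G w" "q \<le> w" "w < n - 1" | (F) "t = F"
  using assms by (auto simp: lex_gen_list_def)

lemma gensI: "j < q \<Longrightarrow> var j \<in> gens" "q \<le> w \<Longrightarrow> w < n - 1 \<Longrightarrow> G w \<in> gens" "F \<in> gens"
  by (auto simp: lex_gen_list_def)

lemma gens_vanish: "g \<in> gens \<Longrightarrow> n - 1 < p \<Longrightarrow> g p = 0"
  using q_less by (auto elim!: gens_cases simp: G_apply F_apply var_apply)

lemma gens_subset_monoms: "gens \<subseteq> monoms n"
  using gens_vanish by (auto simp: monoms_def)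

lemma gens_nonzero: "g \<in> gens \<Longrightarrow> g \<noteq> (\<lambda>_. 0)"
proof (erule gens_cases)
  show "g \<noteq> (\<lambda>_. 0)" if "g = var j" for j using that by (auto simp: fun_eq_iff var_apply)
  show "g \<noteq> (\<lambda>_. 0)" if "g = G w" for w using that by (auto simp: fun_eq_iff G_apply)
  show "g \<noteq> (\<lambda>_. 0)" if "g = F"
    using that c_q_pos q_less by (auto simp: fun_eq_iff F_apply intro!: exI[of _ q])
qed

lemma generators_in_I: "g \<in> gens \<Longrightarrow> g \<in> I"
  using generators_subset_mideal[OF gens_subset_monoms] by blast

lemma mmax_G: "q \<le> v \<Longrightarrow> v < n \<Longrightarrow> mmax n (G v) = v"
  by (rule mmax_eqI) (auto simp: monoms_def G_apply)

lemma mmax_var: "i \<le> n \<Longrightarrow> mmax n (var i) = i"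
  by (rule mmax_eqI) (auto simp: monoms_def var_apply)

lemma mdeg_G: assumes "v < n" "q \<le> v" shows "mdeg n (G v) = csum q (Suc v) + 1"
proof -
  have "mdeg n (G v) = (\<Sum>i\<le>n. (if q \<le> i \<and> i < Suc v then c i else 0) + var v i)"
    unfolding mdeg_def by (rule sum.cong) (use assms in \<open>auto simp: G_apply var_apply\<close>)
  also have "\<dots> = csum q (Suc v) + 1"
    using assms
    by (simp add: sum.distrib sum_atMost_if_atLeastLessThan csum_def mdeg_var[unfolded mdeg_def])
  finally show ?thesis .
qed

lemma mdeg_F: "mdeg n F = csum q n"
  unfolding mdeg_def F_apply using sum_atMost_if_atLeastLessThan[of n n q c] by (simp add: csum_def)

lemma csum_split: "a \<le> b \<Longrightarrow> b \<le> d \<Longrightarrow> csum a d = csum a b + csum b d"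
  unfolding csum_def by (simp add: sum.atLeastLessThan_concat)

lemma csum_ge: "a \<le> p \<Longrightarrow> p < b \<Longrightarrow> c p \<le> csum a b"
  unfolding csum_def by (rule member_le_sum) auto

lemma csum_Suc_left: "a < b \<Longrightarrow> csum a b = c a + csum (Suc a) b"
  unfolding csum_def by (simp add: sum.atLeast_Suc_lessThan)

lemma mdeg_F_pos: "1 \<le> mdeg n F"
  using csum_ge[of q q n] c_q_pos q_less by (simp add: mdeg_F)

lemma mdeg_G_ge_2: "q \<le> v \<Longrightarrow> v < n \<Longrightarrow> 2 \<le> mdeg n (G v)"
  using csum_ge[of q q "Suc v"] c_q_pos by (simp add: mdeg_G)

lemma gens_le_var: assumes "t \<in> gens" "t \<le> var i" "i < q" shows "t = var i"
  using assms(1)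
proof (cases rule: gens_cases)
  case (var j) then show ?thesis using le_funD[OF assms(2), of j] by (auto simp: var_apply split: if_splits)
next
  case (G w) then show ?thesis using le_funD[OF assms(2), of w] assms(3) by (simp add: var_apply G_apply)
next
  case F then show ?thesis using le_funD[OF assms(2), of q] assms(3) c_q_pos q_less by (simp add: var_apply F_apply)
qed

lemma gens_le_G:
  assumes "t \<in> gens" "t \<le> G v" "q \<le> v" "v < n - 1"
  shows "t = G v \<or> (t = F \<and> (\<forall>p. v < p \<and> p < n \<longrightarrow> c p = 0))"
  using assms(1)
proof (cases rule: gens_cases)
  case (var j) then show ?thesis using le_funD[OF assms(2), of j] assms(3) by (simp add: var_apply G_apply)
next
  case (G w)
  then have "w = v" using le_funD[OF assms(2), of w] by (cases w v rule: linorder_cases) (auto simp: G_apply)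
  then show ?thesis using G by simp
next
  case F
  have "c p = 0" if "v < p" "p < n" for p
    using le_funD[OF assms(2), of p] F that assms(3) by (simp add: G_apply F_apply)
  then show ?thesis using F by simp
qed

lemma gens_le_F: assumes "t \<in> gens" "t \<le> F" shows "t = F"
  using assms(1)
proof (cases rule: gens_cases)
  case (var j) then show ?thesis using le_funD[OF assms(2), of j] by (simp add: var_apply F_apply)
next
  case (G w)
  then have "w < n" by simp
  then show ?thesis using le_funD[OF assms(2), of w] G by (simp add: G_apply F_apply)
qed simp

lemma G_neq_F: "q \<le> v \<Longrightarrow> v < n \<Longrightarrow> G v \<noteq> F"
  by (metis F_apply G_apply less_irrefl n_not_Suc_n Suc_eq_plus1)

lemma mingens_I: "mingens I = var ` {..<q} \<union> G ` gen_indices \<union> {F}"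
proof -
  have e: "mingens I = {s\<in>gens. \<forall>t\<in>gens. t \<le> s \<longrightarrow> t = s}"
    by (rule mingens_mideal[OF gens_subset_monoms])
  show ?thesis
  proof (intro equalityI subsetI)
    fix s assume "s \<in> mingens I"
    then have s: "s \<in> gens" "\<And>t. t \<in> gens \<Longrightarrow> t \<le> s \<Longrightarrow> t = s" using e by auto
    from s(1) show "s \<in> var ` {..<q} \<union> G ` gen_indices \<union> {F}"
    proof (cases rule: gens_cases)
      case (G w)
      have "\<exists>p. w < p \<and> p < n \<and> 0 < c p"
      proof (rule ccontr)
        assume "\<not> (\<exists>p. w < p \<and> p < n \<and> 0 < c p)"
        then have "F \<le> G w" using G by (auto simp: le_fun_def G_apply F_apply)
        moreover have "w < n" using G by simp
        ultimately show False using s(2)[OF gensI(3)] G G_neq_F[of w] by auto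
      qed
      then show ?thesis using G by (auto simp: gen_indices_def)
    qed auto
  next
    fix s assume s: "s \<in> var ` {..<q} \<union> G ` gen_indices \<union> {F}"
    then have "s \<in> gens" by (auto simp: gen_indices_def intro: gensI)
    moreover have "t = s" if t: "t \<in> gens" "t \<le> s" for t
    proof -
      from s consider (var) j where "s = var j" "j < q" | (G) w where "s = G w" "w \<in> gen_indices"
        | (F) "s = F" by auto
      then show ?thesis
      proof cases
        case var then show ?thesis using gens_le_var t by simp
      next
        case G then show ?thesis using gens_le_G[of t w] t by (fastforce simp: gen_indices_def)
      next
        case F then show ?thesis using gens_le_F t by simp
      qed
    qed
    ultimately show "s \<in> mingens I" using e by simp
  qed
qed

lemma mingens_I_cases:
  assumes "g \<in> mingens I"
  obtains (var) j where "g = var j" "j < q" | (G) w where "g = G w" "w \<in> gen_indices" | (F) "g = F"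
  using assms by (auto simp: mingens_I)

lemma mingens_I_subset_gens: "mingens I \<subseteq> gens"
  using mingens_mideal_subset[OF gens_subset_monoms] .

lemma F_mingens: "F \<in> mingens I"
  by (simp add: mingens_I)

lemma strongly_stable_I: "strongly_stable n I"
proof (rule strongly_stable_mideal[OF gens_subset_monoms])
  fix g i j assume g: "g \<in> gens" and ij: "i < j" "0 < g j"
  let ?g' = "g(j := g j - 1, i := g i + 1)"
  have "j \<le> n" using monoms_nonzero_le ij(2) g gens_subset_monoms by blast
  then have g'm: "?g' \<in> monoms n" using g gens_subset_monoms ij(1) by (auto simp: monoms_def)
  have dominated: "\<exists>t\<in>gens. t \<le> ?g'"
    if "j < n" and low: "\<And>p. q \<le> p \<Longrightarrow> p < j \<Longrightarrow> c p \<le> g p"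
  proof (cases "i < q")
    case True
    then show ?thesis using ij(1) gensI(1) by (intro bexI[of _ "var i"]) (auto simp: le_fun_def var_apply)
  next
    case False
    have "G i \<le> ?g'" using low ij(1) False by (auto simp: le_fun_def G_apply)
    then show ?thesis using gensI(2)[of i] False ij(1) \<open>j < n\<close> by auto
  qed
  from g have "\<exists>t\<in>gens. t \<le> ?g'"
  proof (cases rule: gens_cases)
    case (var k)
    then have "j = k" using ij(2) by (simp add: var_apply split: if_splits)
    then have "?g' = var i" using var ij(1) by (auto simp: var_apply fun_eq_iff)
    then show ?thesis using var ij(1) \<open>j = k\<close> gensI(1)[of i] by auto
  next
    case (G w)
    then show ?thesis using ij(2) by (intro dominated) (auto simp: G_apply split: if_splits)
  next
    case F
    then show ?thesis using ij(2) by (intro dominated) (auto simp: F_apply split: if_splits)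
  qed
  then show "?g' \<in> I" using g'm by (auto simp: mideal_def)
qed

sublocale strongly_stable_ideal n I
  using monomial_ideal_mideal[of gens n] gens_nonzero strongly_stable_I
  by (auto simp: strongly_stable_ideal_def strongly_stable_ideal_axioms_def)

lemma finite_mingens_I: "finite (mingens I)"
  using mingens_I_subset_gens finite_subset by blast

lemma lex_less_var_var: "i < j \<Longrightarrow> lex_less (var j) (var i)"
  unfolding lex_less_def by (intro exI[of _ i]) (auto simp: var_apply)

lemma lex_less_F_var: "i < q \<Longrightarrow> lex_less F (var i)"
  unfolding lex_less_def by (intro exI[of _ i]) (auto simp: var_apply F_apply)

lemma lex_less_G_G: "q \<le> v \<Longrightarrow> v < w \<Longrightarrow> lex_less (G w) (G v)"
  unfolding lex_less_def by (intro exI[of _ v]) (auto simp: G_apply)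

lemma lex_less_F_G: "q \<le> v \<Longrightarrow> v < n \<Longrightarrow> lex_less F (G v)"
  unfolding lex_less_def by (intro exI[of _ v]) (auto simp: G_apply F_apply)

lemma lex_less_F: "g \<in> gens \<Longrightarrow> g \<noteq> F \<Longrightarrow> lex_less F g"
  using lex_less_F_var lex_less_F_G by (auto elim!: gens_cases)

lemma mdeg_F_eq: "q \<le> v \<Longrightarrow> v < n \<Longrightarrow> mdeg n F + 1 = mdeg n (G v) + csum (Suc v) n"
  using csum_split[of q "Suc v" n] by (simp add: mdeg_F mdeg_G)

lemma mdeg_G_eq: "q \<le> v \<Longrightarrow> v < w \<Longrightarrow> w < n \<Longrightarrow> mdeg n (G w) = mdeg n (G v) + csum (Suc v) (Suc w)"
  using csum_split[of q "Suc v" "Suc w"] by (simp add: mdeg_G)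

lemma mdeg_F_eq_1_imp: assumes "mdeg n F = 1" shows "F = var q"
proof -
  have "csum q n = c q + csum (Suc q) n" using csum_Suc_left q_less by simp
  then have "c q = 1" and rest: "csum (Suc q) n = 0" using assms c_q_pos by (auto simp: mdeg_F)
  moreover have "c p = 0" if "Suc q \<le> p" "p < n" for p using csum_ge[OF that] rest by simp
  ultimately show ?thesis using q_less by (auto simp: fun_eq_iff F_apply var_apply)
qed

lemma mdeg_mingens_le_F: "g \<in> mingens I \<Longrightarrow> mdeg n g \<le> mdeg n F"
proof (erule mingens_I_cases)
  fix w assume "g = G w" "w \<in> gen_indices"
  then obtain p where "g = G w" "q \<le> w" "w < p" "p < n" "0 < c p" by (auto simp: gen_indices_def)
  then show ?thesis using mdeg_F_eq[of w] csum_ge[of "Suc w" p n] by simp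
qed (use mdeg_F_pos q_less in \<open>auto simp: mdeg_var\<close>)

text \<open>A monomial that starts like the lex generators up to x_i cannot become a generator by
  moving one factor x_i to x_(i+1): its x_i-exponent c_i - 1 matches none of them.\<close>

lemma move_right_notin_gens:
  assumes "\<And>p. q \<le> p \<Longrightarrow> p \<le> i \<Longrightarrow> m p = c p" "\<And>p. p < q \<Longrightarrow> m p = 0"
    and "q \<le> i" "0 < c i" "i + 1 < n"
  shows "move_right m i \<notin> gens"
proof
  let ?r = "move_right m i"
  assume "?r \<in> gens"
  have below: "\<And>p. p < i \<Longrightarrow> ?r p = m p" by simp
  have at: "?r i = c i - 1" using assms(1)[of i] assms(3) by simp
  from \<open>?r \<in> gens\<close> show False
  proof (cases rule: gens_cases)
    case (var k)
    then show False using below[of k] assms(2)[of k] assms(3) fun_cong[OF var(1), of k]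
      by (simp add: var_apply)
  next
    case (G w)
    then show False using below[of w] assms(1)[of w] at assms(3,4) fun_cong[OF G(1), of w]
      fun_cong[OF G(1), of i] by (cases w i rule: linorder_cases) (simp_all add: G_apply)
  next
    case F
    then show False using at assms(3-5) fun_cong[OF F, of i] by (simp add: F_apply)
  qed
qed

lemma expandable_var_iff:
  assumes "k < q"
  shows "expandable n I (var k) \<longleftrightarrow> var (Suc k) \<notin> mingens I"
proof -
  have "move_right (var k) i = var (Suc i)" if "var k i > 0" for i
    using that by (auto simp: fun_eq_iff var_apply split: if_splits)
  moreover have "var k i > 0 \<longleftrightarrow> i = k" for i by (simp add: var_apply)
  ultimately show ?thesis using assms q_less by (auto simp: expandable_def mingens_I)
qed

lemma smallest_of_degree_var_iff:
  assumes k: "k < q"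
  shows "smallest_of_degree n I (var k) \<longleftrightarrow> var (Suc k) \<notin> mingens I"
proof
  assume "smallest_of_degree n I (var k)"
  moreover have "move_right (var k) k = var (Suc k)" by (auto simp: fun_eq_iff var_apply)
  ultimately show "var (Suc k) \<notin> mingens I"
    using move_right_mingens_not_smallest_of_degree[of "var k" k I n] k q_less by (auto simp: var_apply)
next
  assume notin: "var (Suc k) \<notin> mingens I"
  then have kq: "Suc k = q" using k by (auto simp: mingens_I)
  have dk: "mdeg n (var k) = 1" using k q_less by (simp add: mdeg_var)
  show "smallest_of_degree n I (var k)" unfolding smallest_of_degree_def
  proof (intro conjI ballI impI)
    show "var k \<in> mingens I" using k by (simp add: mingens_I)
    fix g assume g: "g \<in> mingens I" "mdeg n g = mdeg n (var k)" "g \<noteq> var k"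
    from g(1) show "lex_less (var k) g"
    proof (cases rule: mingens_I_cases)
      case (var j)
      then have "j < k" using g(3) kq by (cases "j = k") auto
      then show ?thesis using var lex_less_var_var by simp
    next
      case (G w) then show ?thesis using g(2) dk mdeg_G_ge_2[of w] by (auto simp: gen_indices_def)
    next
      case F then show ?thesis using g(2) dk mdeg_F_eq_1_imp notin kq F_mingens by simp
    qed
  qed
qed

lemma move_right_G:
  "q \<le> v \<Longrightarrow> move_right (G v) v = (\<lambda>p. if q \<le> p \<and> p \<le> v then c p else if p = Suc v then 1 else 0)"
  by (auto simp: fun_eq_iff G_apply)

lemma move_right_G_mingens_iff:
  assumes "v \<in> gen_indices"
  shows "move_right (G v) v \<in> mingens I
     \<longleftrightarrow> c (Suc v) = 0 \<or> (c (Suc v) = 1 \<and> (\<forall>p. Suc v < p \<and> p < n \<longrightarrow> c p = 0))"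
proof -
  have v: "q \<le> v" "v < n - 1" using assms by (auto simp: gen_indices_def)
  let ?R = "\<lambda>p. if q \<le> p \<and> p \<le> v then c p else if p = Suc v then 1 else (0::nat)"
  show ?thesis unfolding move_right_G[OF v(1)]
  proof
    assume "?R \<in> mingens I"
    then show "c (Suc v) = 0 \<or> (c (Suc v) = 1 \<and> (\<forall>p. Suc v < p \<and> p < n \<longrightarrow> c p = 0))"
    proof (cases rule: mingens_I_cases)
      case (var k)
      then show ?thesis using fun_cong[OF var(1), of k] v by (simp add: var_apply)
    next
      case (G w)
      then have Rw: "?R w = c w + 1" using fun_cong[OF G(1), of w] by (simp add: G_apply)
      moreover have "q \<le> w" using G by (auto simp: gen_indices_def)
      ultimately have "w = Suc v" by (auto split: if_splits)
      then show ?thesis using Rw by simp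
    next
      case F
      have "c p = 0" if "Suc v < p" "p < n" for p using fun_cong[OF F, of p] that v by (simp add: F_apply)
      moreover have "c (Suc v) = 1" using fun_cong[OF F, of "Suc v"] v by (simp add: F_apply)
      ultimately show ?thesis by simp
    qed
  next
    assume "c (Suc v) = 0 \<or> (c (Suc v) = 1 \<and> (\<forall>p. Suc v < p \<and> p < n \<longrightarrow> c p = 0))"
    then consider "c (Suc v) = 0" | "c (Suc v) = 1" "\<forall>p. Suc v < p \<and> p < n \<longrightarrow> c p = 0" by argo
    then show "?R \<in> mingens I"
    proof cases
      case 1
      then have "?R = G (Suc v)" using v by (auto simp: fun_eq_iff G_apply)
      moreover have "Suc v \<in> gen_indices"
      proof -
        obtain p where p: "v < p" "p < n" "0 < c p" using assms by (auto simp: gen_indices_def)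
        then have "Suc v < p" using 1 by (cases "p = Suc v") auto
        then show ?thesis using p v by (auto simp: gen_indices_def)
      qed
      ultimately show ?thesis by (simp add: mingens_I)
    next
      case 2
      then have "?R = F" using v by (auto simp: fun_eq_iff F_apply)
      then show ?thesis by (simp add: F_mingens)
    qed
  qed
qed

lemma expandable_G_iff:
  assumes "v \<in> gen_indices"
  shows "expandable n I (G v) \<longleftrightarrow> move_right (G v) v \<notin> mingens I"
proof -
  have v: "q \<le> v" "v < n - 1" using assms by (auto simp: gen_indices_def)
  have below: "move_right (G v) i \<notin> mingens I" if "i < v" "0 < G v i" for i
  proof -
    have "move_right (G v) i \<notin> gens"
      using that v by (intro move_right_notin_gens) (auto simp: G_apply split: if_splits)
    then show ?thesis using mingens_I_subset_gens by auto
  qed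
  have "(\<forall>i. i + 1 < n \<longrightarrow> 0 < G v i \<longrightarrow> move_right (G v) i \<notin> mingens I)
      \<longleftrightarrow> move_right (G v) v \<notin> mingens I"
  proof (intro iffI allI impI)
    fix i assume "move_right (G v) v \<notin> mingens I" "i + 1 < n" "0 < G v i"
    moreover have "i \<le> v" using \<open>0 < G v i\<close> by (simp add: G_apply split: if_splits)
    ultimately show "move_right (G v) i \<notin> mingens I" using below by (cases "i = v") auto
  next
    assume "\<forall>i. i + 1 < n \<longrightarrow> 0 < G v i \<longrightarrow> move_right (G v) i \<notin> mingens I"
    moreover have "v + 1 < n" "0 < G v v" using v by (auto simp: G_apply)
    ultimately show "move_right (G v) v \<notin> mingens I" by blast
  qed
  moreover have "G v \<in> mingens I" using assms by (simp add: mingens_I)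
  ultimately show ?thesis by (simp add: expandable_def)
qed

lemma smallest_of_degree_G:
  assumes vV: "v \<in> gen_indices"
    and c: "\<not> (c (Suc v) = 0 \<or> (c (Suc v) = 1 \<and> (\<forall>p. Suc v < p \<and> p < n \<longrightarrow> c p = 0)))"
  shows "smallest_of_degree n I (G v)"
proof -
  have v: "q \<le> v" "v < n - 1" using vV by (auto simp: gen_indices_def)
  have c1: "1 \<le> c (Suc v)" using c by simp
  have tail: "2 \<le> csum (Suc v) n"
  proof (cases "c (Suc v) = 1")
    case True
    then obtain p where "Suc v < p" "p < n" "0 < c p" using c by auto
    then show ?thesis using True csum_Suc_left[of "Suc v" n] csum_ge[of "Suc (Suc v)" p n] by simp
  next
    case False
    then show ?thesis using c1 csum_Suc_left[of "Suc v" n] v by simp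
  qed
  show ?thesis unfolding smallest_of_degree_def
  proof (intro conjI ballI impI)
    show "G v \<in> mingens I" using vV by (simp add: mingens_I)
    fix g assume g: "g \<in> mingens I" "mdeg n g = mdeg n (G v)" "g \<noteq> G v"
    from g(1) show "lex_less (G v) g"
    proof (cases rule: mingens_I_cases)
      case (var j)
      have "mdeg n (G v) \<ge> 2" using mdeg_G_ge_2[of v] v by simp
      then show ?thesis using var g(2) q_less by (simp add: mdeg_var)
    next
      case (G w)
      then have w: "q \<le> w" "w < n - 1" by (auto simp: gen_indices_def)
      show ?thesis
      proof (cases w v rule: linorder_cases)
        case less then show ?thesis using G w lex_less_G_G by simp
      next
        case equal then show ?thesis using g(3) G by simp
      next
        case greater
        then show ?thesis using g(2) G mdeg_G_eq[of v w] csum_ge[of "Suc v" "Suc v" "Suc w"] c1 v w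
          by simp
      qed
    next
      case F
      have "v < n" using v by simp
      then show ?thesis using F g(2) mdeg_F_eq[of v] tail v by simp
    qed
  qed
qed

lemma smallest_of_degree_G_iff:
  assumes "v \<in> gen_indices"
  shows "smallest_of_degree n I (G v) \<longleftrightarrow> move_right (G v) v \<notin> mingens I"
proof
  assume "smallest_of_degree n I (G v)"
  moreover have "0 < G v v" "Suc v \<le> n" using assms by (auto simp: G_apply gen_indices_def)
  ultimately show "move_right (G v) v \<notin> mingens I"
    using move_right_mingens_not_smallest_of_degree by blast
qed (use assms smallest_of_degree_G move_right_G_mingens_iff in blast)

lemma expandable_F: "expandable n I F"
  unfolding expandable_def
proof (intro conjI F_mingens allI impI)
  fix i assume i: "i + 1 < n" "0 < F i"
  then have "move_right F i \<notin> gens"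
    by (intro move_right_notin_gens) (auto simp: F_apply split: if_splits)
  then show "move_right F i \<notin> mingens I" using mingens_I_subset_gens by auto
qed

lemma smallest_of_degree_F: "smallest_of_degree n I F"
  using F_mingens lex_less_F mingens_I_subset_gens by (auto simp: smallest_of_degree_def)

theorem expandable_iff_smallest_of_degree:
  "g \<in> mingens I \<Longrightarrow> expandable n I g \<longleftrightarrow> smallest_of_degree n I g"
  by (erule mingens_I_cases)
    (simp_all add: expandable_var_iff smallest_of_degree_var_iff expandable_G_iff
      smallest_of_degree_G_iff expandable_F smallest_of_degree_F)

lemma mdeg_less_F_if_expandable:
  assumes "expandable n I m" "m \<noteq> F"
  shows "mdeg n m < mdeg n F"
proof -
  have mM: "m \<in> mingens I" using assms(1) by (simp add: expandable_def)
  have "smallest_of_degree n I m" using expandable_iff_smallest_of_degree mM assms(1) by blast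
  moreover have "lex_less F m" using lex_less_F mM mingens_I_subset_gens assms(2) by auto
  ultimately have "mdeg n m \<noteq> mdeg n F"
    using F_mingens assms(2) lex_less_asym by (auto simp: smallest_of_degree_def)
  then show ?thesis using mdeg_mingens_le_F[OF mM] by simp
qed

lemma I_saturated: "a \<in> I \<Longrightarrow> a(n := 0) \<in> I"
proof -
  assume a: "a \<in> I"
  then obtain s where s: "s \<in> gens" "s \<le> a" by (auto simp: mideal_def)
  have "s \<le> a(n := 0)" using s gens_vanish[OF s(1), of n] q_less by (auto simp: le_fun_def)
  moreover have "a(n := 0) \<in> monoms n" using a by (auto simp: mideal_def monoms_def)
  ultimately show ?thesis using s(1) by (auto simp: mideal_def)
qed

text \<open>A move x_i \<mapsto> x_j of m landing in I could be brought back to x_(i+1) by stability and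
  would then be a minimal generator by move_right_mingens; saturation disposes of x_n.\<close>

lemma expandable_move_notin:
  assumes m: "expandable n I m" and ij: "i < j" "j \<le> n" "0 < m i"
    and u: "\<And>k. k < n \<Longrightarrow> u k = (m(i := m i - 1, j := m j + 1)) k"
  shows "u \<notin> I"
proof
  assume "u \<in> I"
  then have un: "u(n := 0) \<in> I" by (rule I_saturated)
  have mM: "m \<in> mingens I" using m by (simp add: expandable_def)
  have mz: "m k = 0" if "n \<le> k" for k
    using that gens_vanish mM mingens_I_subset_gens q_less by auto
  have "u \<in> monoms n" using \<open>u \<in> I\<close> mideal_subset_monoms by blast
  then have uz: "u k = 0" if "n < k" for k using that by (auto simp: monoms_def)
  have un_eq: "u(n := 0) = m(i := m i - 1, j := m j + 1, n := 0)"
  proof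
    fix x show "(u(n := 0)) x = (m(i := m i - 1, j := m j + 1, n := 0)) x"
      using u[of x] uz[of x] mz[of x] ij by (cases x n rule: linorder_cases) auto
  qed
  show False
  proof (cases "j = n")
    case True
    then have "u(n := 0) = m(i := m i - 1)"
      using un_eq mz[of n] ij by (auto simp: fun_eq_iff)
    then show False using un mingens_fun_upd_pred_notin[OF mM ij(3)] by simp
  next
    case False
    then have jn: "j < n" using ij by simp
    have "u(n := 0) = m(i := m i - 1, j := m j + 1)"
      using un_eq mz[of n] ij jn by (auto simp: fun_eq_iff)
    then have "m(i := m i - 1, j := m j + 1) \<in> I" using un by simp
    then have "move_right m i \<in> I"
    proof (cases "j = Suc i")
      case False
      then have "Suc i < j" using ij by simp
      from move_left_mem[OF \<open>m(i := m i - 1, j := m j + 1) \<in> I\<close> this]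
      show ?thesis using \<open>Suc i < j\<close> by (simp add: fun_upd_twist)
    qed simp
    then have "move_right m i \<in> mingens I" using move_right_mingens[OF mM ij(3)] by simp
    moreover have "i + 1 < n" using ij jn by simp
    ultimately show False using m ij(3) by (auto simp: expandable_def)
  qed
qed

lemma mmax_mingens_I_le:
  assumes "g \<in> mingens I"
  shows "mmax n g \<le> n - 1"
proof -
  have "g \<in> gens" using assms mingens_I_subset_gens by auto
  then show ?thesis using gens_subset_monoms gens_nonzero gens_vanish by (intro mmax_le) auto
qed

text \<open>The last generator alone attains the maximal value deg F + (n - 1) of deg g + max g.\<close>

lemma degree_Kpoly_I_ge:
  assumes "0 < c (n - 1)"
  shows "mdeg n F + n - 1 \<le> degree (Kpoly n I)"
proof -
  have mF: "mmax n F = n - 1"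
    by (rule mmax_eqI) (use assms q_less in \<open>auto simp: F_apply monoms_def\<close>)
  have "mdeg n g + mmax n g < mdeg n F + mmax n F" if "g \<in> mingens I" "g \<noteq> F" for g
    using that(1)
  proof (cases rule: mingens_I_cases)
    case (var j) then show ?thesis using q_less mdeg_F_pos mF by (simp add: mdeg_var mmax_var)
  next
    case (G w)
    then show ?thesis using mdeg_mingens_le_F[OF that(1)] mmax_G[of w] mF by (auto simp: gen_indices_def)
  qed (use that in simp)
  then have "mdeg n F + mmax n F \<le> degree (Kpoly n I)"
    using mdeg_F_pos by (intro degree_Kpoly_ge finite_mingens_I F_mingens) auto
  then show ?thesis using mF q_less by simp
qed

end

lemma lex_ideal_lex_exponents:
  assumes "d < n" "0 < e d"
  shows "lex_ideal n (n - Suc d) (lex_exponents n d e)"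
proof
  have "n - Suc (n - Suc d) = d" using assms(1) by simp
  then show "0 < lex_exponents n d e (n - Suc d)"
    using assms(2) by (simp add: lex_exponents_def aa_def ee_def)
qed (use assms in simp)

lemma LexIdeal_eq:
  "d < n \<Longrightarrow> LexIdeal n d e = mideal n (set (lex_gen_list n (n - Suc d) (lex_exponents n d e)))"
  unfolding LexIdeal_def lexgens_eq_lex_gen_list ..

lemma lastgen_eq:
  assumes "d < n" "0 < e d"
  shows "lastgen n d e = lex_last_gen n (n - Suc d) (lex_exponents n d e)"
proof -
  interpret lex_ideal n "n - Suc d" "lex_exponents n d e"
    using lex_ideal_lex_exponents[of d n e, OF assms] .
  show ?thesis
    using F_mingens by (simp add: lastgen_def LexIdeal_eq[OF assms(1)] lexgens_eq_lex_gen_list[OF assms(1)]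
      lex_gen_list_def)
qed

text \<open>Raising e_0 by one (the Hilbert polynomial 1 + p) raises a_0, the exponent of x_(n-1), by one.\<close>

lemma lex_exponents_Suc_e0:
  assumes "\<forall>i<d. e (Suc i) \<le> e i" "p < n"
  shows "lex_exponents n d (e(0 := e 0 + 1)) p
    = (if p = n - 1 then lex_exponents n d e p + 1 else lex_exponents n d e p)"
proof -
  have "ee d e 1 \<le> e 0" using assms(1) by (cases d) (auto simp: ee_def)
  then show ?thesis using assms(2) by (cases "n - Suc p") (auto simp: lex_exponents_def aa_def ee_def)
qed

lemma mdeg_lex_last_gen_Suc:
  assumes "q < n" "\<And>p. p < n \<Longrightarrow> c' p = (if p = n - 1 then c p + 1 else c p)"
  shows "mdeg n (lex_last_gen n q c') = mdeg n (lex_last_gen n q c) + 1"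
proof -
  have "lex_last_gen n q c' = (lex_last_gen n q c)(n - 1 := Suc (lex_last_gen n q c (n - 1)))"
    using assms by (auto simp: fun_eq_iff lex_last_gen_def)
  then show ?thesis using mdeg_fun_upd_Suc[of "n - 1" n] by simp
qed

lemma degree_Kpoly_LexIdeal_Suc_e0_ge:
  assumes "d < n" "\<forall>i<d. e (Suc i) \<le> e i" "0 < e d"
  shows "mdeg n (lastgen n d e) + n \<le> degree (Kpoly n (LexIdeal n d (e(0 := e 0 + 1))))"
proof -
  let ?q = "n - Suc d" and ?c = "lex_exponents n d e" and ?c' = "lex_exponents n d (e(0 := e 0 + 1))"
  interpret L: lex_ideal n ?q ?c using lex_ideal_lex_exponents[of d n e, OF assms(1,3)] .
  interpret L': lex_ideal n ?q ?c' using lex_ideal_lex_exponents[of d n "e(0 := e 0 + 1)"] assms(1,3) by simp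
  have c': "\<And>p. p < n \<Longrightarrow> ?c' p = (if p = n - 1 then ?c p + 1 else ?c p)"
    using lex_exponents_Suc_e0[OF assms(2)] by blast
  then show ?thesis
    using L'.degree_Kpoly_I_ge c'[of "n - 1"] mdeg_lex_last_gen_Suc[OF L.q_less c'] L.q_less assms
    by (simp add: LexIdeal_eq lastgen_eq)
qed

section \<open>Expansions of lexicographic ideals\<close>

locale lex_expansion = lex_ideal +
  fixes m :: "nat \<Rightarrow> nat"
  assumes expandable_m: "expandable n I m"
begin

definition expansion_gens :: "(nat \<Rightarrow> nat) set" where
  "expansion_gens = (I - mideal n {m}) \<union> {m(j := m j + 1) | j. mmax n m \<le> j \<and> j \<le> n - 1}"

abbreviation "E \<equiv> mideal n expansion_gens"

lemma expansion_eq: "expansion n I m = E"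
  by (simp add: expansion_def expansion_gens_def)

lemma m_mingens: "m \<in> mingens I"
  using expandable_m by (simp add: expandable_def)

lemma m_gens: "m \<in> gens"
  using m_mingens mingens_I_subset_gens by auto

lemma m_monoms: "m \<in> monoms n"
  using m_gens gens_subset_monoms by auto

lemma m_in_I: "m \<in> I"
  using m_gens by (rule generators_in_I)

lemma mmax_m_le: "mmax n m \<le> n - 1"
  using mmax_mingens_I_le[OF m_mingens] .

lemma m_mmax_pos: "0 < m (mmax n m)"
  using mmax_props(2)[OF m_monoms gens_nonzero[OF m_gens]] .

lemma mem_mideal_m_iff: "a \<in> monoms n \<Longrightarrow> a \<in> mideal n {m} \<longleftrightarrow> m \<le> a"
  by (auto simp: mideal_def)

lemma expansion_gens_subset_monoms: "expansion_gens \<subseteq> monoms n"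
  using m_monoms mmax_m_le by (auto simp: expansion_gens_def mideal_def monoms_def)

lemma expansion_gens_subset_E: "expansion_gens \<subseteq> E"
  using generators_subset_mideal[OF expansion_gens_subset_monoms] .

lemma expansion_gens_nonzero: "(\<lambda>_. 0) \<notin> expansion_gens"
  using one_notin by (auto simp: expansion_gens_def fun_eq_iff)

lemma expansion_gens_cases:
  assumes "t \<in> expansion_gens"
  obtains (old) "t \<in> I" "\<not> m \<le> t" | (new) k where "t = m(k := m k + 1)" "mmax n m \<le> k" "k \<le> n - 1"
proof -
  from assms consider "t \<in> I" "t \<notin> mideal n {m}" | k where "t = m(k := m k + 1)" "mmax n m \<le> k" "k \<le> n - 1"
    by (auto simp: expansion_gens_def)
  then show ?thesis using that mem_mideal_m_iff[of t] mideal_subset_monoms[of n gens] by blast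
qed

lemma old_gen_in_expansion_gens: "b \<in> I \<Longrightarrow> \<not> m \<le> b \<Longrightarrow> b \<in> expansion_gens"
  using mem_mideal_m_iff[of b] mideal_subset_monoms[of n gens] by (auto simp: expansion_gens_def)

lemma proper_multiple_in_E:
  assumes "m \<le> a" "a \<in> monoms n" "m k < a k" "k < n"
  shows "a \<in> E"
proof (cases "mmax n m \<le> k")
  case True
  then have "m(k := m k + 1) \<in> expansion_gens" using assms(4) by (auto simp: expansion_gens_def)
  moreover have "m(k := m k + 1) \<le> a" using assms(1,3) by (auto simp: le_fun_def)
  ultimately show ?thesis using expansion_gens_subset_E mideal_upward_closed assms(2) by blast
next
  case False
  let ?b = "m(mmax n m := m (mmax n m) - 1, k := m k + 1)"
  have "?b \<in> I" using move_left_mem[OF m_in_I _ m_mmax_pos, of k] False by simp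
  moreover have "\<not> m \<le> ?b" using False m_mmax_pos by (auto simp: le_fun_def intro!: exI[of _ "mmax n m"])
  ultimately have "?b \<in> expansion_gens" by (rule old_gen_in_expansion_gens)
  moreover have "?b \<le> a" using assms(1,3) False
    by (auto simp: le_fun_def) (metis diff_le_self le_trans)
  ultimately show ?thesis using expansion_gens_subset_E mideal_upward_closed assms(2) by blast
qed

lemma move_left_old_gen_in_E:
  assumes t: "t \<in> I" "\<not> m \<le> t" and ij: "i < j" "0 < t j"
  shows "t(j := t j - 1, i := t i + 1) \<in> E"
proof -
  define t' where "t' = t(j := t j - 1, i := t i + 1)"
  have t'I: "t' \<in> I" unfolding t'_def using move_left_mem[OF t(1) ij] .
  then have t'm: "t' \<in> monoms n" using mideal_subset_monoms by blast
  have "t \<in> monoms n" using t(1) mideal_subset_monoms by blast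
  then have "j \<le> n" using monoms_nonzero_le ij(2) by (metis neq0_conv)
  have "t' \<in> E"
  proof (cases "m \<le> t'")
    case False
    then show ?thesis using old_gen_in_expansion_gens[OF t'I] expansion_gens_subset_E by blast
  next
    case True
    show ?thesis
    proof (cases "\<exists>k<n. m k < t' k")
      case True
      then show ?thesis using proper_multiple_in_E[OF \<open>m \<le> t'\<close> t'm] by blast
    next
      case False
      have agree: "t' k = m k" if "k < n" for k
        using False le_funD[OF \<open>m \<le> t'\<close>, of k] that by (meson le_antisym not_less)
      have "i < n" using ij \<open>j \<le> n\<close> by simp
      then have mi: "m i = t i + 1" using agree[of i] ij(1) by (simp add: t'_def)
      have t_eq: "t k = (m(i := m i - 1, j := m j + 1)) k" if "k < n" for k
        using agree[OF that] mi ij by (cases "k = i"; cases "k = j") (auto simp: t'_def)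
      have "0 < m i" using mi by simp
      from expandable_move_notin[OF expandable_m ij(1) \<open>j \<le> n\<close> this t_eq]
      have "t \<notin> I" .
      then show ?thesis using t(1) by simp
    qed
  qed
  then show ?thesis by (simp add: t'_def)
qed

lemma move_left_new_gen_in_E:
  assumes k: "mmax n m \<le> k" "k \<le> n - 1" and ij: "i < j" "0 < (m(k := m k + 1)) j"
  shows "(m(k := m k + 1))(j := (m(k := m k + 1)) j - 1, i := (m(k := m k + 1)) i + 1) \<in> E"
proof -
  define t where "t = m(k := m k + 1)"
  define t' where "t' = t(j := t j - 1, i := t i + 1)"
  have "t \<in> monoms n" using m_monoms k q_less by (auto simp: t_def monoms_def)
  then have "j \<le> n" using monoms_nonzero_le ij(2) unfolding t_def by (metis neq0_conv)
  then have t'm: "t' \<in> monoms n" using \<open>t \<in> monoms n\<close> ij(1) by (auto simp: t'_def monoms_def)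
  have "t' \<in> E"
  proof (cases "j = k")
    case True
    then have "t' = m(i := m i + 1)" using ij(1) by (auto simp: fun_eq_iff t'_def t_def)
    moreover have "i < n" using ij \<open>j \<le> n\<close> by simp
    ultimately show ?thesis using proper_multiple_in_E[OF _ t'm, of i] by (auto simp: le_fun_def)
  next
    case False
    define b where "b = m(j := m j - 1, i := m i + 1)"
    have mj: "0 < m j" using ij(2) False by simp
    have "b \<in> I" unfolding b_def using move_left_mem[OF m_in_I ij(1) mj] .
    moreover have "\<not> m \<le> b" using mj ij(1) le_funD[of m b j] by (auto simp: b_def)
    ultimately have "b \<in> expansion_gens" by (rule old_gen_in_expansion_gens)
    moreover have "b \<le> t'" unfolding le_fun_def
    proof
      fix x show "b x \<le> t' x" using False ij(1) by (auto simp: b_def t'_def t_def)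
    qed
    ultimately show ?thesis using expansion_gens_subset_E mideal_upward_closed t'm by blast
  qed
  then show ?thesis by (simp add: t'_def t_def)
qed

sublocale E: strongly_stable_ideal n E
proof -
  have "strongly_stable n E"
  proof (rule strongly_stable_mideal[OF expansion_gens_subset_monoms])
    fix t i j assume t: "t \<in> expansion_gens" and ij: "i < j" "0 < t j"
    from t show "t(j := t j - 1, i := t i + 1) \<in> E"
    proof (cases rule: expansion_gens_cases)
      case old then show ?thesis using move_left_old_gen_in_E ij by blast
    next
      case (new k) then show ?thesis using move_left_new_gen_in_E[OF new(2,3) ij(1)] ij(2) by simp
    qed
  qed
  then show "strongly_stable_ideal n E"
    using monomial_ideal_mideal[OF expansion_gens_nonzero]
    by (auto simp: strongly_stable_ideal_def strongly_stable_ideal_axioms_def)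
qed

lemma mingens_E_cases:
  assumes "g \<in> mingens E"
  shows "g \<in> mingens I \<or> (\<exists>j. g = m(j := m j + 1) \<and> mmax n m \<le> j \<and> j \<le> n - 1)"
proof -
  have "g \<in> expansion_gens" using mingens_mideal_subset[OF expansion_gens_subset_monoms] assms by auto
  then show ?thesis
  proof (cases rule: expansion_gens_cases)
    case old
    obtain h where h: "h \<in> mingens I" "h \<le> g"
      using ek_decomposition_exists[OF old(1)] by blast
    then have "h \<in> I" "\<not> m \<le> h" using old(2) order.trans by (auto simp: mingens_def)
    then have "h \<in> E" using old_gen_in_expansion_gens expansion_gens_subset_E by blast
    then have "h = g" using assms h(2) by (auto simp: mingens_def)
    then show ?thesis using h(1) by simp
  qed auto
qed

lemma finite_mingens_E: "finite (mingens E)"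
proof -
  have "mingens E \<subseteq> mingens I \<union> (\<lambda>j. m(j := m j + 1)) ` {..n}"
    using mingens_E_cases by fastforce
  then show ?thesis using finite_mingens_I by (meson finite_Un finite_imageI finite_atMost finite_subset)
qed

lemma mingens_E_bounds:
  assumes "m \<noteq> F" "g \<in> mingens E"
  shows "mdeg n g \<le> mdeg n F" "mmax n g \<le> n - 1"
proof -
  from mingens_E_cases[OF assms(2)] have "mdeg n g \<le> mdeg n F \<and> mmax n g \<le> n - 1"
  proof
    assume "g \<in> mingens I"
    then show ?thesis using mdeg_mingens_le_F mmax_mingens_I_le by simp
  next
    assume "\<exists>j. g = m(j := m j + 1) \<and> mmax n m \<le> j \<and> j \<le> n - 1"
    then obtain j where j: "g = m(j := m j + 1)" "mmax n m \<le> j" "j \<le> n - 1" by blast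
    have "mdeg n g = Suc (mdeg n m)" using mdeg_fun_upd_Suc[of j n m] j q_less by simp
    moreover have "mdeg n m < mdeg n F" using mdeg_less_F_if_expandable[OF expandable_m assms(1)] .
    moreover have "mmax n g \<le> n - 1"
      using j m_monoms gens_vanish[OF m_gens] q_less
      by (intro mmax_le) (auto simp: monoms_def fun_eq_iff intro!: exI[of _ j])
    ultimately show ?thesis by simp
  qed
  then show "mdeg n g \<le> mdeg n F" "mmax n g \<le> n - 1" by auto
qed

lemma degree_Kpoly_E_less:
  assumes "m \<noteq> F"
  shows "degree (Kpoly n E) < mdeg n F + n"
  using mingens_E_bounds[OF assms] q_less
  by (intro E.degree_Kpoly_less finite_mingens_E) fastforce+

end

theorem proposition6p6:
  fixes n d :: nat and e :: "nat \<Rightarrow> nat"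
  assumes "d < n"
    and "\<forall>i<d. e (Suc i) \<le> e i"
    and "0 < e d"
  shows "(\<forall>m\<in>mingens (LexIdeal n d e).
            expandable n (LexIdeal n d e) m \<longleftrightarrow> smallest_of_degree n (LexIdeal n d e) m)
       \<and> (\<forall>m. expandable n (LexIdeal n d e) m \<and> m \<noteq> lastgen n d e \<longrightarrow>
            (\<forall>g\<in>mingens (expansion n (LexIdeal n d e) m).
                mdeg n g < 1 + mdeg n (lastgen n d e))
            \<and> degree (Kpoly n (expansion n (LexIdeal n d e) m))
                < degree (Kpoly n (LexIdeal n d (e(0 := e 0 + 1)))))"
proof -
  interpret lex_ideal n "n - Suc d" "lex_exponents n d e"
    using lex_ideal_lex_exponents[of d n e, OF assms(1,3)] .
  have "(\<forall>g\<in>mingens (expansion n I m). mdeg n g < 1 + mdeg n F)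
      \<and> degree (Kpoly n (expansion n I m)) < mdeg n F + n" if "expandable n I m" "m \<noteq> F" for m
  proof -
    interpret lex_expansion n "n - Suc d" "lex_exponents n d e" m using that by unfold_locales
    show ?thesis using mingens_E_bounds(1) degree_Kpoly_E_less that(2) by (fastforce simp: expansion_eq)
  qed
  then show ?thesis
    using expandable_iff_smallest_of_degree degree_Kpoly_LexIdeal_Suc_e0_ge[OF assms] assms
    by (fastforce simp: LexIdeal_eq lastgen_eq)
qed

end
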